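(* Let $n,a,b,Z$ be positive integers with $\max\{a,b\}\le n\le a+b$, let $\Psi\in\mathbb{R}^{n\times n}$ be a positive semidefinite matrix, and let $K^{(3)}\in\mathbb{R}^{m_3\times n}$, $K^{(4)}\in\mathbb{R}^{m_4\times n}$. Then there exist integers $\tilde n,\tilde a,\tilde b$ with $\max\{\tilde a,\tilde b\}\le\tilde n\le\tilde a+\tilde b$, a positive semidefinite matrix $\tilde\Psi\in\mathbb{R}^{\tilde n\times\tilde n}$ with $\operatorname{rank}(\tilde\Psi)=\tilde n$, and matrices $\tilde K^{(3)}\in\mathbb{R}^{m_3\times\tilde n}$, $\tilde K^{(4)}\in\mathbb{R}^{m_4\times\tilde n}$, such that the problems $\mathrm{TaskAwareCoding}(n,\Psi,a,b,Z,K^{(3)},K^{(4)})$ and $\mathrm{TaskAwareCoding}(\tilde n,\tilde\Psi,\tilde a,\tilde b,Z,\tilde K^{(3)},\tilde K^{(4)})$ have equal optimal overall task losses, and an optimal coding scheme for either of the two problems can be transformed linearly (by multiplying its encoding and decoding matrices by fixed matrices) into an optimal coding scheme for the other.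
   Context: Problem $\mathrm{TaskAwareCoding}(n,\Psi,a,b,Z,K^{(3)},K^{(4)})$ (task-aware linear network coding over the butterfly network): let $x=(x_1,\dots,x_n)^\top$ be a real random vector with $\mathbb{E}[x]=0$ and covariance $\mathbb{E}[xx^\top]=\Psi$, and let $x^{(1)}=(x_1,\dots,x_a)^\top$, $x^{(2)}=(x_{n-b+1},\dots,x_n)^\top$. A coding scheme consists of matrices $E^{(1,3)},E^{(1,5)}\in\mathbb{R}^{Z\times a}$, $E^{(2,4)},E^{(2,5)}\in\mathbb{R}^{Z\times b}$, $E^{(5,6)}\in\mathbb{R}^{Z\times 2Z}$, $D^{(3)},D^{(4)}\in\mathbb{R}^{n\times 2Z}$. Set $\phi^{(1,3)}=E^{(1,3)}x^{(1)}$, $\phi^{(1,5)}=E^{(1,5)}x^{(1)}$, $\phi^{(2,4)}=E^{(2,4)}x^{(2)}$, $\phi^{(2,5)}=E^{(2,5)}x^{(2)}$, $\phi^{(5,6)}=E^{(5,6)}\begin{bmatrix}\phi^{(1,5)}\\ \phi^{(2,5)}\end{bmatrix}$, and reconstructions $\hat x^{(3)}=D^{(3)}\begin{bmatrix}\phi^{(1,3)}\\ \phi^{(5,6)}\end{bmatrix}$, $\hat x^{(4)}=D^{(4)}\begin{bmatrix}\phi^{(2,4)}\\ \phi^{(5,6)}\end{bmatrix}$. The overall task loss is $\mathcal{L}_{\text{total}}=\sum_{i\in\{3,4\}}\mathbb{E}\|K^{(i)}x-K^{(i)}\hat x^{(i)}\|_2^2$, which depends on the distribution of $x$ only through $\Psi$.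 The problem is to minimize $\mathcal{L}_{\text{total}}$ over all coding schemes; its optimal overall task loss is the minimum value, and an optimal coding scheme is a minimizer. *)

theory Defs
  imports "Jordan_Normal_Form.DL_Rank"
begin

definition psd_mat :: "nat \<Rightarrow> real mat \<Rightarrow> bool" where
  "psd_mat n P \<longleftrightarrow> P \<in> carrier_mat n n \<and> transpose_mat P = P \<and>
     (\<forall>v \<in> carrier_vec n. 0 \<le> v \<bullet> (P *\<^sub>v v))"

record scheme =
  E13 :: "real mat"
  E15 :: "real mat"
  E24 :: "real mat"
  E25 :: "real mat"
  E56 :: "real mat"
  D3 :: "real mat"
  D4 :: "real mat"

definition scheme_ok :: "nat \<Rightarrow> nat \<Rightarrow> nat \<Rightarrow> nat \<Rightarrow> scheme \<Rightarrow> bool" where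
  "scheme_ok n a b Z s \<longleftrightarrow>
     E13 s \<in> carrier_mat Z a \<and> E15 s \<in> carrier_mat Z a \<and>
     E24 s \<in> carrier_mat Z b \<and> E25 s \<in> carrier_mat Z b \<and>
     E56 s \<in> carrier_mat Z (2 * Z) \<and>
     D3 s \<in> carrier_mat n (2 * Z) \<and> D4 s \<in> carrier_mat n (2 * Z)"

text \<open>x1 = sel1 n a * x (first a coordinates), x2 = sel2 n b * x (last b coordinates).\<close>
definition sel1 :: "nat \<Rightarrow> nat \<Rightarrow> real mat" where
  "sel1 n a = mat a n (\<lambda>(i, j). if j = i then 1 else 0)"

definition sel2 :: "nat \<Rightarrow> nat \<Rightarrow> real mat" where
  "sel2 n b = mat b n (\<lambda>(i, j). if j = n - b + i then 1 else 0)"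

definition vstack :: "real mat \<Rightarrow> real mat \<Rightarrow> real mat" where
  "vstack A B = mat (dim_row A + dim_row B) (dim_col A)
     (\<lambda>(i, j). if i < dim_row A then A $$ (i, j) else B $$ (i - dim_row A, j))"

text \<open>phi56 = enc56 * x, and the messages received at nodes 3 and 4 as linear maps of x.\<close>
definition enc56 :: "nat \<Rightarrow> nat \<Rightarrow> nat \<Rightarrow> scheme \<Rightarrow> real mat" where
  "enc56 n a b s = E56 s * vstack (E15 s * sel1 n a) (E25 s * sel2 n b)"

definition msg3 :: "nat \<Rightarrow> nat \<Rightarrow> nat \<Rightarrow> scheme \<Rightarrow> real mat" where
  "msg3 n a b s = vstack (E13 s * sel1 n a) (enc56 n a b s)"

definition msg4 :: "nat \<Rightarrow> nat \<Rightarrow> nat \<Rightarrow> scheme \<Rightarrow> real mat" where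
  "msg4 n a b s = vstack (E24 s * sel2 n b) (enc56 n a b s)"

definition mat_trace :: "real mat \<Rightarrow> real" where
  "mat_trace A = (\<Sum>i<dim_row A. A $$ (i, i))"

text \<open>E||K x - K D M x||^2 = tr (K (I - D M) Psi (I - D M)^T K^T) for E[x]=0, E[x x^T]=Psi.\<close>
definition task_err :: "nat \<Rightarrow> real mat \<Rightarrow> real mat \<Rightarrow> real mat \<Rightarrow> real mat \<Rightarrow> real" where
  "task_err n Psi K D M =
     (let R = K * (1\<^sub>m n - D * M) in mat_trace (R * Psi * transpose_mat R))"

definition total_loss :: "nat \<Rightarrow> real mat \<Rightarrow> nat \<Rightarrow> nat \<Rightarrow> real mat \<Rightarrow> real mat \<Rightarrow> scheme \<Rightarrow> real" where
  "total_loss n Psi a b K3 K4 s =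
     task_err n Psi K3 (D3 s) (msg3 n a b s) + task_err n Psi K4 (D4 s) (msg4 n a b s)"

definition opt_loss :: "nat \<Rightarrow> real mat \<Rightarrow> nat \<Rightarrow> nat \<Rightarrow> nat \<Rightarrow> real mat \<Rightarrow> real mat \<Rightarrow> real" where
  "opt_loss n Psi a b Z K3 K4 = Inf {total_loss n Psi a b K3 K4 s | s. scheme_ok n a b Z s}"

definition optimal_scheme :: "nat \<Rightarrow> real mat \<Rightarrow> nat \<Rightarrow> nat \<Rightarrow> nat \<Rightarrow> real mat \<Rightarrow> real mat \<Rightarrow> scheme \<Rightarrow> bool" where
  "optimal_scheme n Psi a b Z K3 K4 s \<longleftrightarrow> scheme_ok n a b Z s \<and>
     (\<forall>s'. scheme_ok n a b Z s' \<longrightarrow> total_loss n Psi a b K3 K4 s \<le> total_loss n Psi a b K3 K4 s')"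

definition lin_transform :: "real mat \<Rightarrow> real mat \<Rightarrow> real mat \<Rightarrow> real mat \<Rightarrow> real mat \<Rightarrow>
    real mat \<Rightarrow> real mat \<Rightarrow> scheme \<Rightarrow> scheme" where
  "lin_transform P13 P15 P24 P25 P56 Q3 Q4 s =
     \<lparr>E13 = E13 s * P13, E15 = E15 s * P15, E24 = E24 s * P24, E25 = E25 s * P25,
      E56 = E56 s * P56, D3 = Q3 * D3 s, D4 = Q4 * D4 s\<rparr>"

end

theory Submission
  imports Defs
begin

text \<open>If Psi is singular, take v \<noteq> 0 with Psi v = 0; then v^T x = 0 almost surely, so some
  coordinate of x is a linear combination of others. Either that coordinate can be deleted, which
  lowers n, or a combination of coordinates seen by the first source can be handed to the second
  one as well, which raises b. Each step is a change of variables x = B x', x' = C x that moves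
  coding schemes between the two problems by fixed matrices: backwards with the same loss, and
  forwards with no larger loss once the decoders are corrected by the orthogonal projection onto
  the column space of K B. So the optimal losses agree and optimal schemes correspond. Induction
  on 2 n - b ends at a nonsingular, hence full-rank, covariance.\<close>

section \<open>Matrix algebra\<close>

lemma assoc_mult_mat_dims:
  fixes A B C :: "real mat"
  assumes "dim_col A = dim_row B" "dim_col B = dim_row C"
  shows "A * B * C = A * (B * C)"
  using assms
  by (intro assoc_mult_mat[of A "dim_row A" "dim_col A" B "dim_col B" C "dim_col C"]) auto

lemma mult_minus_distrib_dims:
  fixes A B C :: "real mat"
  assumes "dim_col A = dim_row B" "dim_row B = dim_row C" "dim_col B = dim_col C"
  shows "A * (B - C) = A * B - A * C"
  using assms by (intro mult_minus_distrib_mat[of A "dim_row A" "dim_col A" B "dim_col B" C]) auto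

lemma minus_mult_distrib_dims:
  fixes A B C :: "real mat"
  assumes "dim_row A = dim_row B" "dim_col A = dim_col B" "dim_col A = dim_row C"
  shows "(A - B) * C = A * C - B * C"
  using assms by (intro minus_mult_distrib_mat[of A "dim_row A" "dim_col A" B C "dim_col C"]) auto

lemmas mat_algebra_dims = assoc_mult_mat_dims mult_minus_distrib_dims minus_mult_distrib_dims

lemma index_mat_mult_mat:
  fixes f g :: "nat \<times> nat \<Rightarrow> real"
  assumes "i < m" "k < p"
  shows "(mat m n f * mat n p g) $$ (i, k) = (\<Sum>l<n. f (i, l) * g (l, k))"
  using assms by (simp add: scalar_prod_def atLeast0LessThan)

lemma smult_mat_mult_vec:
  fixes A :: "real mat"
  assumes "A \<in> carrier_mat m n" "x \<in> carrier_vec n"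
  shows "(c \<cdot>\<^sub>m A) *\<^sub>v x = c \<cdot>\<^sub>v (A *\<^sub>v x)"
  using assms by (intro eq_vecI) (auto simp: scalar_prod_def sum_distrib_left mult_ac)

lemma mat_trace_mult_comm:
  fixes A B :: "real mat"
  assumes "A \<in> carrier_mat m k" "B \<in> carrier_mat k m"
  shows "mat_trace (A * B) = mat_trace (B * A)"
proof -
  have "mat_trace (A * B) = (\<Sum>i<m. \<Sum>l<k. A $$ (i, l) * B $$ (l, i))"
    using assms by (simp add: mat_trace_def scalar_prod_def atLeast0LessThan)
  also have "\<dots> = (\<Sum>l<k. \<Sum>i<m. B $$ (l, i) * A $$ (i, l))"
    by (subst sum.swap) (simp add: mult.commute)
  also have "\<dots> = mat_trace (B * A)"
    using assms by (simp add: mat_trace_def scalar_prod_def atLeast0LessThan)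
  finally show ?thesis .
qed

lemma mat_trace_minus:
  fixes A B :: "real mat"
  assumes "A \<in> carrier_mat m m" "B \<in> carrier_mat m m"
  shows "mat_trace (A - B) = mat_trace A - mat_trace B"
  using assms by (simp add: mat_trace_def sum_subtractf)

lemma psd_matD:
  assumes "psd_mat n P"
  shows "P \<in> carrier_mat n n" "transpose_mat P = P" "v \<in> carrier_vec n \<Longrightarrow> 0 \<le> v \<bullet> (P *\<^sub>v v)"
  using assms unfolding psd_mat_def by auto

lemma psd_mat_congruence:
  fixes X P :: "real mat"
  assumes P: "psd_mat k P" and X: "X \<in> carrier_mat m k"
  shows "psd_mat m (X * P * transpose_mat X)"
proof -
  note Pc = psd_matD[OF P]
  have "0 \<le> v \<bullet> (X * P * transpose_mat X *\<^sub>v v)" if v: "v \<in> carrier_vec m" for v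
  proof -
    let ?w = "transpose_mat X *\<^sub>v v"
    have w: "?w \<in> carrier_vec k" using X v by auto
    have "v \<bullet> (X * P * transpose_mat X *\<^sub>v v) = v \<bullet> (X *\<^sub>v (P *\<^sub>v ?w))"
      using X Pc v by (simp add: assoc_mult_mat_vec[of _ m k _ m])
    also have "\<dots> = ?w \<bullet> (P *\<^sub>v ?w)"
      using transpose_vec_mult_scalar[of X m k "P *\<^sub>v ?w" v] X Pc v by simp
    finally show ?thesis using Pc(3)[OF w] by simp
  qed
  moreover have "transpose_mat (X * P * transpose_mat X) = X * P * transpose_mat X"
    using X Pc by (simp add: transpose_mult[of _ m k _ m] transpose_mult[of _ k k _ m])
  ultimately show ?thesis unfolding psd_mat_def using X Pc by auto
qed

lemma psd_mat_trace_nonneg: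
  assumes P: "psd_mat n P"
  shows "0 \<le> mat_trace P"
proof -
  have "0 \<le> P $$ (i, i)" if i: "i < n" for i
  proof -
    have "P $$ (i, i) = unit_vec n i \<bullet> (P *\<^sub>v unit_vec n i)"
      using psd_matD(1)[OF P] i by (simp add: scalar_prod_left_unit)
    then show ?thesis using psd_matD(3)[OF P, of "unit_vec n i"] by simp
  qed
  then show ?thesis
    using psd_matD(1)[OF P] unfolding mat_trace_def by (auto intro!: sum_nonneg)
qed

lemma congruence_transfer:
  fixes R R' C Psi :: "real mat"
  assumes R: "R \<in> carrier_mat m n" and R': "R' \<in> carrier_mat m n'" and C: "C \<in> carrier_mat n' n"
    and Psi: "Psi \<in> carrier_mat n n" "transpose_mat Psi = Psi"
    and RPsi: "R * Psi = R' * (C * Psi)"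
  shows "R * Psi * transpose_mat R = R' * (C * Psi * transpose_mat C) * transpose_mat R'"
proof -
  have "Psi * transpose_mat R = transpose_mat (R * Psi)"
    using transpose_mult[OF R Psi(1)] Psi by simp
  also have "\<dots> = Psi * transpose_mat C * transpose_mat R'"
    unfolding RPsi using transpose_mult[OF R', of "C * Psi" n] transpose_mult[OF C Psi(1)] C Psi
    by simp
  finally have "R' * (C * (Psi * transpose_mat R))
      = R' * (C * (Psi * transpose_mat C * transpose_mat R'))"
    by simp
  then show ?thesis
    using RPsi R R' C Psi by (simp add: assoc_mult_mat_dims)
qed

lemma scalar_prod_self_eq_0:
  fixes u :: "real vec"
  assumes "u \<in> carrier_vec m" "u \<bullet> u = 0"
  shows "u = 0\<^sub>v m"
proof (intro eq_vecI)
  have "(\<Sum>i<m. u $ i * u $ i) = 0"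
    using assms by (simp add: scalar_prod_def atLeast0LessThan)
  then show "u $ i = 0\<^sub>v m $ i" if "i < dim_vec (0\<^sub>v m)" for i
    using that by (subst (asm) sum_nonneg_eq_0_iff) auto
qed (use assms in auto)

definition outer_prod :: "real vec \<Rightarrow> real vec \<Rightarrow> real mat" where
  "outer_prod u w = mat (dim_vec u) (dim_vec w) (\<lambda>(i, j). u $ i * w $ j)"

lemma outer_prod_carrier [simp]:
  "u \<in> carrier_vec m \<Longrightarrow> w \<in> carrier_vec k \<Longrightarrow> outer_prod u w \<in> carrier_mat m k"
  unfolding outer_prod_def by auto

lemma outer_prod_zero [simp]:
  "outer_prod (0\<^sub>v m) w = 0\<^sub>m m (dim_vec w)" "outer_prod u (0\<^sub>v k) = 0\<^sub>m (dim_vec u) k"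
  unfolding outer_prod_def by (auto intro!: eq_matI)

lemma transpose_outer_prod: "transpose_mat (c \<cdot>\<^sub>m outer_prod u w) = c \<cdot>\<^sub>m outer_prod w u"
  unfolding outer_prod_def by (intro eq_matI) auto

lemma mult_outer_prod:
  assumes "A \<in> carrier_mat m n" "u \<in> carrier_vec n"
  shows "A * outer_prod u w = outer_prod (A *\<^sub>v u) w"
  using assms unfolding outer_prod_def
  by (intro eq_matI) (auto simp: scalar_prod_def sum_distrib_right mult.assoc)

lemma outer_prod_mult:
  assumes "A \<in> carrier_mat k p" "w \<in> carrier_vec k"
  shows "outer_prod u w * A = outer_prod u (transpose_mat A *\<^sub>v w)"
  using assms unfolding outer_prod_def
  by (intro eq_matI) (auto simp: scalar_prod_def sum_distrib_left mult_ac)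

lemma outer_prod_mult_outer_prod:
  assumes "w \<in> carrier_vec k" "x \<in> carrier_vec k"
  shows "outer_prod u w * outer_prod x y = (w \<bullet> x) \<cdot>\<^sub>m outer_prod u y"
  using assms unfolding outer_prod_def
  by (intro eq_matI) (auto simp: scalar_prod_def sum_distrib_left sum_distrib_right mult_ac)

lemma outer_prod_mult_vec:
  assumes "w \<in> carrier_vec k" "x \<in> carrier_vec k"
  shows "outer_prod u w *\<^sub>v x = (w \<bullet> x) \<cdot>\<^sub>v u"
  using assms unfolding outer_prod_def
  by (intro eq_vecI) (auto simp: scalar_prod_def sum_distrib_left mult_ac)

section \<open>Orthogonal projections\<close>

definition orth_proj :: "nat \<Rightarrow> real mat \<Rightarrow> bool" where
  "orth_proj m P \<longleftrightarrow> P \<in> carrier_mat m m \<and> transpose_mat P = P \<and> P * P = P"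

lemma orth_proj_compl:
  assumes P: "orth_proj m P"
  shows "orth_proj m (1\<^sub>m m - P)"
proof -
  have Pc: "P \<in> carrier_mat m m" "transpose_mat P = P" "P * P = P"
    using P unfolding orth_proj_def by auto
  have "(1\<^sub>m m - P) * P = 0\<^sub>m m m"
    using Pc by (simp add: minus_mult_distrib_mat[of _ m m])
  then have "(1\<^sub>m m - P) * (1\<^sub>m m - P) = 1\<^sub>m m - P"
    using Pc by (subst mult_minus_distrib_mat[of _ m m]) auto
  then show ?thesis
    unfolding orth_proj_def using Pc by (auto simp: transpose_minus[of _ m m])
qed

lemma orth_proj_trace_le:
  assumes P: "orth_proj m P" and Y: "psd_mat m Y"
  shows "mat_trace (P * Y * P) \<le> mat_trace Y"
proof -
  have trace_sandwich: "mat_trace (Q * Y * Q) = mat_trace (Q * Y)" if Q: "orth_proj m Q" for Q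
  proof -
    have Qc: "Q \<in> carrier_mat m m" "Q * Q = Q" using Q unfolding orth_proj_def by auto
    have "mat_trace (Q * Y * Q) = mat_trace (Q * (Q * Y))"
      using mat_trace_mult_comm[of "Q * Y" m m Q] Qc psd_matD(1)[OF Y] by simp
    also have "\<dots> = mat_trace (Q * Y)"
      using Qc psd_matD(1)[OF Y] by (simp flip: assoc_mult_mat[of Q m m Q m Y m])
    finally show ?thesis .
  qed
  define N where "N = 1\<^sub>m m - P"
  have N: "orth_proj m N" unfolding N_def by (rule orth_proj_compl[OF P])
  have Pc: "P \<in> carrier_mat m m" and Yc: "Y \<in> carrier_mat m m"
    using P psd_matD(1)[OF Y] unfolding orth_proj_def by auto
  have "0 \<le> mat_trace (N * Y * transpose_mat N)"
    using N psd_mat_trace_nonneg[OF psd_mat_congruence[OF Y]] unfolding orth_proj_def by blast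
  also have "\<dots> = mat_trace (N * Y)"
    using trace_sandwich[OF N] N unfolding orth_proj_def by simp
  also have "N * Y = Y - P * Y"
    unfolding N_def using Pc Yc by (simp add: minus_mult_distrib_mat[of _ m m])
  finally show ?thesis
    using trace_sandwich[OF P] Pc Yc by (simp add: mat_trace_minus)
qed

lemma orth_proj_scalar_prod:
  assumes P: "orth_proj m P" and "x \<in> carrier_vec m" "y \<in> carrier_vec m"
  shows "(P *\<^sub>v x) \<bullet> y = x \<bullet> (P *\<^sub>v y)"
  using transpose_vec_mult_scalar[of P m m y x] P assms(2,3) unfolding orth_proj_def
  by (simp add: comm_scalar_prod[of _ m])

lemma orth_proj_residual:
  assumes P: "orth_proj m P" and x: "x \<in> carrier_vec m"
  shows "P *\<^sub>v (x - P *\<^sub>v x) = 0\<^sub>v m"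
    "y \<in> carrier_vec m \<Longrightarrow> (x - P *\<^sub>v x) \<bullet> (P *\<^sub>v y) = 0"
proof -
  have Pc: "P \<in> carrier_mat m m" "P * P = P" using P unfolding orth_proj_def by auto
  show res: "P *\<^sub>v (x - P *\<^sub>v x) = 0\<^sub>v m"
    using Pc x by (simp add: mult_minus_distrib_mat_vec flip: assoc_mult_mat_vec[of P m m P m x])
  show "(x - P *\<^sub>v x) \<bullet> (P *\<^sub>v y) = 0" if y: "y \<in> carrier_vec m"
    using orth_proj_scalar_prod[OF P _ y, of "x - P *\<^sub>v x"] res Pc x y by simp
qed

text \<open>For u = 0 this holds because 1 / 0 = 0.\<close>
lemma orth_proj_rank_one_update:
  assumes P: "orth_proj m P" and u: "u \<in> carrier_vec m" and Pu: "P *\<^sub>v u = 0\<^sub>v m"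
  shows "orth_proj m (P + (1 / (u \<bullet> u)) \<cdot>\<^sub>m outer_prod u u)"
proof -
  define c where "c = 1 / (u \<bullet> u)"
  define T where "T = c \<cdot>\<^sub>m outer_prod u u"
  have Pc: "P \<in> carrier_mat m m" "transpose_mat P = P" "P * P = P"
    using P unfolding orth_proj_def by auto
  have Tc: "T \<in> carrier_mat m m" unfolding T_def using u by simp
  have PT: "P * T = 0\<^sub>m m m"
    unfolding T_def using Pc u Pu
    by (simp add: mult_smult_distrib[of P m m _ m] mult_outer_prod[of P m m])
  have TP: "T * P = 0\<^sub>m m m"
    unfolding T_def using Pc u Pu
    by (simp add: mult_smult_assoc_mat[of _ m m P m] outer_prod_mult[of P m m])
  have "T * T = c \<cdot>\<^sub>m (c \<cdot>\<^sub>m ((u \<bullet> u) \<cdot>\<^sub>m outer_prod u u))"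
    unfolding T_def using u
    by (simp add: mult_smult_assoc_mat[of _ m m _ m] mult_smult_distrib[of _ m m _ m]
        outer_prod_mult_outer_prod[of _ m])
  also have "\<dots> = T"
  proof -
    have "c * (c * ((u \<bullet> u) * x)) = c * x" for x
      unfolding c_def by (cases "u \<bullet> u = 0") auto
    then show ?thesis unfolding T_def by (intro eq_matI) auto
  qed
  finally have TT: "T * T = T" .
  have "(P + T) * (P + T) = P * P + T * P + (P * T + T * T)"
    using Pc Tc by (simp add: add_mult_distrib_mat[of _ m m] mult_add_distrib_mat[of _ m m])
  also have "\<dots> = P + T" using Pc Tc PT TP TT by simp
  finally have "(P + T) * (P + T) = P + T" .
  moreover have "transpose_mat (P + T) = P + T"
    using Pc Tc transpose_outer_prod[of c u u] unfolding T_def by (simp add: transpose_add)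
  ultimately show ?thesis
    unfolding orth_proj_def T_def[symmetric] c_def[symmetric] using Pc Tc by auto
qed

lemma orth_proj_rank_one_update_fixes:
  assumes P: "orth_proj m P" and c: "c \<in> carrier_vec m" and u: "u = c - P *\<^sub>v c"
  shows "y \<in> carrier_vec m \<Longrightarrow> P *\<^sub>v y = y \<Longrightarrow>
      (P + (1 / (u \<bullet> u)) \<cdot>\<^sub>m outer_prod u u) *\<^sub>v y = y"
    and "(P + (1 / (u \<bullet> u)) \<cdot>\<^sub>m outer_prod u u) *\<^sub>v c = c"
proof -
  have Pc: "P \<in> carrier_mat m m" using P unfolding orth_proj_def by auto
  have uc: "u \<in> carrier_vec m" unfolding u using c Pc by simp
  have apply_update: "(P + (1 / (u \<bullet> u)) \<cdot>\<^sub>m outer_prod u u) *\<^sub>v y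
      = P *\<^sub>v y + ((u \<bullet> y) / (u \<bullet> u)) \<cdot>\<^sub>v u" if y: "y \<in> carrier_vec m" for y
    using y uc Pc
    by (simp add: add_mult_distrib_mat_vec[of _ m m] outer_prod_mult_vec[of _ m]
        smult_mat_mult_vec[of _ m m] smult_smult_assoc)
  show "(P + (1 / (u \<bullet> u)) \<cdot>\<^sub>m outer_prod u u) *\<^sub>v y = y"
    if y: "y \<in> carrier_vec m" and Py: "P *\<^sub>v y = y"
  proof -
    have "u \<bullet> y = 0"
      using orth_proj_residual(2)[OF P c y] Py unfolding u by simp
    then show ?thesis using apply_update[OF y] Py y uc by (intro eq_vecI) auto
  qed
  have c_split: "P *\<^sub>v c + u = c"
    unfolding u using c Pc by (intro eq_vecI) auto
  have "u \<bullet> c = u \<bullet> (P *\<^sub>v c + u)" using c_split by simp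
  also have "\<dots> = u \<bullet> (P *\<^sub>v c) + u \<bullet> u"
    using uc c Pc by (simp add: scalar_prod_add_distrib[of u m])
  also have "u \<bullet> (P *\<^sub>v c) = 0"
    unfolding u by (rule orth_proj_residual(2)[OF P c c])
  finally have uc_eq: "u \<bullet> c = u \<bullet> u" by simp
  show "(P + (1 / (u \<bullet> u)) \<cdot>\<^sub>m outer_prod u u) *\<^sub>v c = c"
    unfolding apply_update[OF c] uc_eq
  proof (intro eq_vecI)
    fix i assume "i < dim_vec c"
    then have i: "i < m" using c by simp
    have "(P *\<^sub>v c) $ i + u $ i = c $ i"
      using arg_cong[OF c_split, of "\<lambda>v. v $ i"] i uc Pc c by simp
    moreover have "u $ i = 0" if "u \<bullet> u = 0"
      using scalar_prod_self_eq_0[OF uc that] i by simp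
    ultimately show "(P *\<^sub>v c + ((u \<bullet> u) / (u \<bullet> u)) \<cdot>\<^sub>v u) $ i = c $ i"
      using i uc Pc by (cases "u \<bullet> u = 0") auto
  qed (use c uc Pc in auto)
qed

lemma orth_proj_update_fixes_cols:
  assumes P: "orth_proj m P" and X: "X \<in> carrier_mat m (Suc k)"
    and PX: "P * mat m k (\<lambda>(i, j). X $$ (i, j)) = mat m k (\<lambda>(i, j). X $$ (i, j))"
    and u: "u = col X k - P *\<^sub>v col X k"
  shows "(P + (1 / (u \<bullet> u)) \<cdot>\<^sub>m outer_prod u u) * X = X"
proof -
  define X0 where "X0 = mat m k (\<lambda>(i, j). X $$ (i, j))"
  have Pc: "P \<in> carrier_mat m m" using P unfolding orth_proj_def by auto
  have uc: "u \<in> carrier_vec m" unfolding u using col_dim[of X k] X Pc by simp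
  have X0: "X0 \<in> carrier_mat m k" unfolding X0_def by simp
  have "col ((P + (1 / (u \<bullet> u)) \<cdot>\<^sub>m outer_prod u u) * X) j = col X j" if j: "j < Suc k" for j
  proof -
    have "col ((P + (1 / (u \<bullet> u)) \<cdot>\<^sub>m outer_prod u u) * X) j
        = (P + (1 / (u \<bullet> u)) \<cdot>\<^sub>m outer_prod u u) *\<^sub>v col X j"
      using X j Pc uc by (intro col_mult2[of _ m m]) auto
    also have "\<dots> = col X j"
    proof (cases "j < k")
      case True
      have "col X j = col X0 j" using True X unfolding X0_def by (intro eq_vecI) auto
      then have "P *\<^sub>v col X j = col X j"
        using col_mult2[OF Pc X0 True] PX[folded X0_def] by simp
      then show ?thesis
        using orth_proj_rank_one_update_fixes(1)[OF P _ u] col_dim[of X j] col_dim[of X k] X by simp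
    next
      case False
      then have "j = k" using j by auto
      then show ?thesis using orth_proj_rank_one_update_fixes(2)[OF P _ u] col_dim[of X k] X by simp
    qed
    finally show ?thesis .
  qed
  then show ?thesis using X Pc uc by (intro mat_col_eqI) (auto simp: outer_prod_def)
qed

lemma mult_split_last_col:
  fixes X R :: "real mat"
  assumes X: "X \<in> carrier_mat m (Suc k)"
  shows "R \<in> carrier_mat k p \<Longrightarrow>
      X * mat (Suc k) p (\<lambda>(i, j). if i < k then R $$ (i, j) else 0)
      = mat m k (\<lambda>(i, j). X $$ (i, j)) * R"
    and "v \<in> carrier_vec k \<Longrightarrow>
      X *\<^sub>v vec (Suc k) (\<lambda>i. if i < k then v $ i else a)
      = mat m k (\<lambda>(i, j). X $$ (i, j)) *\<^sub>v v + a \<cdot>\<^sub>v col X k"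
  using X by (auto intro!: eq_matI eq_vecI simp: scalar_prod_def atLeast0LessThan lessThan_Suc)

text \<open>Gram--Schmidt on the columns: the residual of the last column against the projection onto
  the others is added as a rank-one update.\<close>
lemma orth_proj_onto_cols:
  fixes X :: "real mat"
  assumes "X \<in> carrier_mat m k"
  shows "\<exists>R \<in> carrier_mat k m. orth_proj m (X * R) \<and> X * R * X = X"
  using assms
proof (induction k arbitrary: X)
  case 0
  have "X * 0\<^sub>m 0 m = 0\<^sub>m m m" "0\<^sub>m m m * X = X" using 0 by (auto intro!: eq_matI)
  then show ?case unfolding orth_proj_def by (intro bexI[of _ "0\<^sub>m 0 m"]) auto
next
  case (Suc k)
  have X: "X \<in> carrier_mat m (Suc k)" by fact
  define X0 where "X0 = mat m k (\<lambda>(i, j). X $$ (i, j))"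
  obtain R0 where R0: "R0 \<in> carrier_mat k m" and P0: "orth_proj m (X0 * R0)"
    and P0X0: "X0 * R0 * X0 = X0"
    using Suc.IH[of X0] unfolding X0_def by auto
  define P0 where "P0 = X0 * R0"
  define c where "c = col X k"
  define u where "u = c - P0 *\<^sub>v c"
  define w where "w = vec (Suc k) (\<lambda>i. if i < k then ((- 1) \<cdot>\<^sub>v (R0 *\<^sub>v c)) $ i else 1)"
  define R0' where "R0' = mat (Suc k) m (\<lambda>(i, j). if i < k then R0 $$ (i, j) else 0)"
  define R where "R = R0' + (1 / (u \<bullet> u)) \<cdot>\<^sub>m outer_prod w u"
  note P0 = P0[folded P0_def]
  have X0: "X0 \<in> carrier_mat m k" unfolding X0_def by simp
  have P0c: "P0 \<in> carrier_mat m m" using P0 unfolding orth_proj_def by auto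
  have c: "c \<in> carrier_vec m" unfolding c_def using col_dim[of X k] X by simp
  have u: "u \<in> carrier_vec m" unfolding u_def using c P0c by simp
  have Xw: "X *\<^sub>v w = u"
  proof -
    have "X *\<^sub>v w = X0 *\<^sub>v ((- 1) \<cdot>\<^sub>v (R0 *\<^sub>v c)) + 1 \<cdot>\<^sub>v c"
      unfolding w_def X0_def c_def
      by (rule mult_split_last_col(2)[OF X]) (use R0 c[unfolded c_def] in auto)
    also have "X0 *\<^sub>v ((- 1) \<cdot>\<^sub>v (R0 *\<^sub>v c)) = (- 1) \<cdot>\<^sub>v (P0 *\<^sub>v c)"
      unfolding P0_def using X0 R0 c by (simp add: mult_mat_vec[of X0 m k])
    finally show ?thesis unfolding u_def using P0c c by (auto intro!: eq_vecI)
  qed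
  have w: "w \<in> carrier_vec (Suc k)" and R0': "R0' \<in> carrier_mat (Suc k) m"
    unfolding w_def R0'_def by auto
  have XR: "X * R = P0 + (1 / (u \<bullet> u)) \<cdot>\<^sub>m outer_prod u u"
    unfolding R_def using X R0' u w Xw mult_split_last_col(1)[OF X R0, folded X0_def P0_def R0'_def]
    by (simp add: mult_add_distrib_mat[of X m "Suc k"] mult_smult_distrib[of X m "Suc k" _ m]
        mult_outer_prod[of X m "Suc k"])
  have proj: "orth_proj m (X * R)"
    unfolding XR using orth_proj_rank_one_update[OF P0 u] orth_proj_residual(1)[OF P0 c]
    unfolding u_def by simp
  have "X * R * X = X"
    unfolding XR using orth_proj_update_fixes_cols[OF P0 X _ u_def[unfolded c_def]] P0X0
    unfolding P0_def X0_def c_def by simp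
  then show ?case using proj R0' u w unfolding R_def by auto
qed

lemma decoder_correction_exists:
  fixes K B :: "real mat"
  assumes K: "K \<in> carrier_mat m n" and B: "B \<in> carrier_mat n n'"
  shows "\<exists>Q P. Q \<in> carrier_mat n' n \<and> orth_proj m P \<and> P * (K * B) = K * B \<and> K * B * Q = P * K"
proof -
  obtain R where R: "R \<in> carrier_mat n' m" and P: "orth_proj m (K * B * R)"
    and PKB: "K * B * R * (K * B) = K * B"
    using orth_proj_onto_cols[of "K * B" m n'] K B by auto
  have "K * B * (R * K) = K * B * R * K"
    using carrier_matD[OF K] carrier_matD[OF B] carrier_matD[OF R]
    by (simp add: assoc_mult_mat_dims)
  then show ?thesis using R K P PKB by (intro exI[of _ "R * K"] exI[of _ "K * B * R"]) auto
qed

section \<open>Messages and losses of a coding scheme\<close>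

lemma scheme_ok_carriers:
  assumes "scheme_ok n a b Z s"
  shows "E13 s \<in> carrier_mat Z a" "E15 s \<in> carrier_mat Z a" "E24 s \<in> carrier_mat Z b"
    "E25 s \<in> carrier_mat Z b" "E56 s \<in> carrier_mat Z (2 * Z)" "D3 s \<in> carrier_mat n (2 * Z)"
    "D4 s \<in> carrier_mat n (2 * Z)"
  using assms unfolding scheme_ok_def by auto

lemma scheme_ok_exists: "\<exists>s. scheme_ok n a b Z s"
proof
  show "scheme_ok n a b Z \<lparr>E13 = 0\<^sub>m Z a, E15 = 0\<^sub>m Z a, E24 = 0\<^sub>m Z b, E25 = 0\<^sub>m Z b,
      E56 = 0\<^sub>m Z (2 * Z), D3 = 0\<^sub>m n (2 * Z), D4 = 0\<^sub>m n (2 * Z)\<rparr>"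
    unfolding scheme_ok_def by simp
qed

lemma sel1_carrier [simp]: "sel1 n a \<in> carrier_mat a n"
  by (simp add: sel1_def)

lemma sel2_carrier [simp]: "sel2 n b \<in> carrier_mat b n"
  by (simp add: sel2_def)

lemma sel_dims [simp]:
  "dim_row (sel1 n a) = a" "dim_col (sel1 n a) = n"
  "dim_row (sel2 n b) = b" "dim_col (sel2 n b) = n"
  by (simp_all add: sel1_def sel2_def)

lemma index_sel_mult:
  fixes B :: "real mat"
  assumes "B \<in> carrier_mat n p" "l < p"
  shows "i < a \<Longrightarrow> a \<le> n \<Longrightarrow> (sel1 n a * B) $$ (i, l) = B $$ (i, l)"
    and "i < b \<Longrightarrow> b \<le> n \<Longrightarrow> (sel2 n b * B) $$ (i, l) = B $$ (n - b + i, l)"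
proof -
  show "(sel1 n a * B) $$ (i, l) = B $$ (i, l)" if "i < a" "a \<le> n"
  proof -
    have "row (sel1 n a) i = unit_vec n i"
      using that by (auto simp: sel1_def unit_vec_def intro!: eq_vecI)
    then show ?thesis using assms that by simp
  qed
  show "(sel2 n b * B) $$ (i, l) = B $$ (n - b + i, l)" if "i < b" "b \<le> n"
  proof -
    have "row (sel2 n b) i = unit_vec n (n - b + i)"
      using that by (auto simp: sel2_def unit_vec_def intro!: eq_vecI)
    then show ?thesis using assms that by simp
  qed
qed

lemma index_mult_sel:
  fixes A :: "real mat"
  assumes "i < dim_row A" "l < n"
  shows "A \<in> carrier_mat r a \<Longrightarrow> (A * sel1 n a) $$ (i, l) = (if l < a then A $$ (i, l) else 0)"
    and "A \<in> carrier_mat r b \<Longrightarrow> b \<le> n \<Longrightarrow>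
      (A * sel2 n b) $$ (i, l) = (if n - b \<le> l then A $$ (i, l - (n - b)) else 0)"
proof -
  show "(A * sel1 n a) $$ (i, l) = (if l < a then A $$ (i, l) else 0)" if "A \<in> carrier_mat r a"
  proof -
    have "col (sel1 n a) l = (if l < a then unit_vec a l else 0\<^sub>v a)"
      using assms by (auto simp: sel1_def unit_vec_def intro!: eq_vecI)
    then show ?thesis using assms that by auto
  qed
  show "(A * sel2 n b) $$ (i, l) = (if n - b \<le> l then A $$ (i, l - (n - b)) else 0)"
    if "A \<in> carrier_mat r b" "b \<le> n"
  proof -
    have "col (sel2 n b) l = (if n - b \<le> l then unit_vec b (l - (n - b)) else 0\<^sub>v b)"
      using assms that by (auto simp: sel2_def unit_vec_def intro!: eq_vecI)
    then show ?thesis using assms that by auto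
  qed
qed

lemma sel_mult_block:
  fixes B :: "real mat"
  assumes B: "B \<in> carrier_mat n n'"
  shows "a \<le> n \<Longrightarrow> a' \<le> n' \<Longrightarrow> (\<And>i l. i < a \<Longrightarrow> l < n' \<Longrightarrow> a' \<le> l \<Longrightarrow> B $$ (i, l) = 0) \<Longrightarrow>
      mat a a' (\<lambda>(i, t). B $$ (i, t)) * sel1 n' a' = sel1 n a * B"
    and "b \<le> n \<Longrightarrow> b' \<le> n' \<Longrightarrow>
      (\<And>i l. i < n \<Longrightarrow> n - b \<le> i \<Longrightarrow> l < n' - b' \<Longrightarrow> B $$ (i, l) = 0) \<Longrightarrow>
      mat b b' (\<lambda>(i, t). B $$ (n - b + i, n' - b' + t)) * sel2 n' b' = sel2 n b * B"
proof -
  show "mat a a' (\<lambda>(i, t). B $$ (i, t)) * sel1 n' a' = sel1 n a * B"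
    if "a \<le> n" "a' \<le> n'" and zero: "\<And>i l. i < a \<Longrightarrow> l < n' \<Longrightarrow> a' \<le> l \<Longrightarrow> B $$ (i, l) = 0"
  proof (rule eq_matI)
    fix i l assume "i < dim_row (sel1 n a * B)" "l < dim_col (sel1 n a * B)"
    then have il: "i < a" "l < n'" using B by auto
    then show "(mat a a' (\<lambda>(i, t). B $$ (i, t)) * sel1 n' a') $$ (i, l) = (sel1 n a * B) $$ (i, l)"
      using index_mult_sel(1)[of i "mat a a' (\<lambda>(i, t). B $$ (i, t))" l n' a a']
        index_sel_mult(1)[OF B il(2) il(1)] zero[of i l] that by auto
  qed (use B in auto)
  show "mat b b' (\<lambda>(i, t). B $$ (n - b + i, n' - b' + t)) * sel2 n' b' = sel2 n b * B"
    if "b \<le> n" "b' \<le> n'"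
      and zero: "\<And>i l. i < n \<Longrightarrow> n - b \<le> i \<Longrightarrow> l < n' - b' \<Longrightarrow> B $$ (i, l) = 0"
  proof (rule eq_matI)
    fix i l assume "i < dim_row (sel2 n b * B)" "l < dim_col (sel2 n b * B)"
    then have il: "i < b" "l < n'" using B by auto
    then show "(mat b b' (\<lambda>(i, t). B $$ (n - b + i, n' - b' + t)) * sel2 n' b') $$ (i, l)
        = (sel2 n b * B) $$ (i, l)"
      using index_mult_sel(2)[of i "mat b b' (\<lambda>(i, t). B $$ (n - b + i, n' - b' + t))" l n' b b']
        index_sel_mult(2)[OF B il(2) il(1)] zero[of "n - b + i" l] that by auto
  qed (use B in auto)
qed

lemma vstack_dims [simp]:
  "dim_row (vstack A B) = dim_row A + dim_row B" "dim_col (vstack A B) = dim_col A"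
  by (simp_all add: vstack_def)

lemma index_vstack [simp]:
  "i < dim_row A + dim_row B \<Longrightarrow> j < dim_col A \<Longrightarrow>
    vstack A B $$ (i, j) = (if i < dim_row A then A $$ (i, j) else B $$ (i - dim_row A, j))"
  by (simp add: vstack_def)

lemma vstack_carrier [simp]:
  "A \<in> carrier_mat r1 c \<Longrightarrow> B \<in> carrier_mat r2 c \<Longrightarrow> vstack A B \<in> carrier_mat (r1 + r2) c"
  unfolding carrier_mat_def by simp

lemma vstack_mult:
  fixes A B X :: "real mat"
  assumes A: "A \<in> carrier_mat r1 c" and B: "B \<in> carrier_mat r2 c" and X: "X \<in> carrier_mat c d"
  shows "vstack A B * X = vstack (A * X) (B * X)"
proof (rule eq_matI)
  fix i j assume "i < dim_row (vstack (A * X) (B * X))" "j < dim_col (vstack (A * X) (B * X))"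
  then have ij: "i < r1 + r2" "j < d" using A B X by auto
  have "row (vstack A B) i = (if i < r1 then row A i else row B (i - r1))"
    using A B ij by (auto intro!: eq_vecI)
  then show "(vstack A B * X) $$ (i, j) = vstack (A * X) (B * X) $$ (i, j)"
    using A B X ij by simp
qed (use A B X in auto)

definition relay_msg :: "scheme \<Rightarrow> real mat \<Rightarrow> real mat \<Rightarrow> real mat" where
  "relay_msg s Y1 Y2 = E56 s * vstack (E15 s * Y1) (E25 s * Y2)"

definition node3_msg :: "scheme \<Rightarrow> real mat \<Rightarrow> real mat \<Rightarrow> real mat" where
  "node3_msg s Y1 Y2 = vstack (E13 s * Y1) (relay_msg s Y1 Y2)"

definition node4_msg :: "scheme \<Rightarrow> real mat \<Rightarrow> real mat \<Rightarrow> real mat" where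
  "node4_msg s Y1 Y2 = vstack (E24 s * Y2) (relay_msg s Y1 Y2)"

lemma relay_msg_carrier:
  assumes "scheme_ok n a b Z s" "Y1 \<in> carrier_mat a d" "Y2 \<in> carrier_mat b d"
  shows "relay_msg s Y1 Y2 \<in> carrier_mat Z d"
  using scheme_ok_carriers[OF assms(1)] assms(2,3) unfolding relay_msg_def
  by (metis mult_carrier_mat vstack_carrier mult_2)

lemma node_msg_carrier:
  assumes "scheme_ok n a b Z s" "Y1 \<in> carrier_mat a d" "Y2 \<in> carrier_mat b d"
  shows "node3_msg s Y1 Y2 \<in> carrier_mat (2 * Z) d" "node4_msg s Y1 Y2 \<in> carrier_mat (2 * Z) d"
  using scheme_ok_carriers[OF assms(1)] relay_msg_carrier[OF assms] assms(2,3)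
  unfolding node3_msg_def node4_msg_def by (metis mult_carrier_mat vstack_carrier mult_2)+

lemma msg_carrier:
  assumes "scheme_ok n a b Z s"
  shows "msg3 n a b s \<in> carrier_mat (2 * Z) n" "msg4 n a b s \<in> carrier_mat (2 * Z) n"
  using node_msg_carrier[OF assms sel1_carrier sel2_carrier]
  unfolding msg3_def msg4_def enc56_def node3_msg_def node4_msg_def relay_msg_def by auto

lemma msg_mult:
  assumes ok: "scheme_ok n a b Z s" and X: "X \<in> carrier_mat n d"
  shows "msg3 n a b s * X = node3_msg s (sel1 n a * X) (sel2 n b * X)"
    "msg4 n a b s * X = node4_msg s (sel1 n a * X) (sel2 n b * X)"
proof -
  note c = scheme_ok_carriers[OF ok]
  have V: "vstack (E15 s * sel1 n a) (E25 s * sel2 n b) \<in> carrier_mat (2 * Z) n"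
    using c by (simp add: mult_2)
  have "enc56 n a b s * X = E56 s * (vstack (E15 s * sel1 n a) (E25 s * sel2 n b) * X)"
    unfolding enc56_def using c V X by simp
  also have "vstack (E15 s * sel1 n a) (E25 s * sel2 n b) * X
      = vstack (E15 s * (sel1 n a * X)) (E25 s * (sel2 n b * X))"
    using c X by (simp add: vstack_mult[of _ Z n _ Z] assoc_mult_mat[of _ Z a _ n _ d]
        assoc_mult_mat[of _ Z b _ n _ d])
  finally have relay: "enc56 n a b s * X = relay_msg s (sel1 n a * X) (sel2 n b * X)"
    unfolding relay_msg_def .
  have enc: "enc56 n a b s \<in> carrier_mat Z n"
    unfolding enc56_def using c V by auto
  show "msg3 n a b s * X = node3_msg s (sel1 n a * X) (sel2 n b * X)"
    "msg4 n a b s * X = node4_msg s (sel1 n a * X) (sel2 n b * X)"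
    unfolding msg3_def msg4_def node3_msg_def node4_msg_def using c X enc relay
    by (simp_all add: vstack_mult[of _ Z n _ Z] assoc_mult_mat[of _ Z a _ n _ d]
        assoc_mult_mat[of _ Z b _ n _ d])
qed

definition source_recode ::
    "real mat \<Rightarrow> real mat \<Rightarrow> nat \<Rightarrow> real mat \<Rightarrow> real mat \<Rightarrow> scheme \<Rightarrow> scheme" where
  "source_recode G1 G2 Z Q3 Q4 = lin_transform G1 G1 G2 G2 (1\<^sub>m (2 * Z)) Q3 Q4"

lemma scheme_ok_source_recode:
  assumes "scheme_ok n a b Z s" "G1 \<in> carrier_mat a a'" "G2 \<in> carrier_mat b b'"
    "Q3 \<in> carrier_mat n' n" "Q4 \<in> carrier_mat n' n"
  shows "scheme_ok n' a' b' Z (source_recode G1 G2 Z Q3 Q4 s)"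
  using scheme_ok_carriers[OF assms(1)] assms(2-)
  unfolding scheme_ok_def source_recode_def lin_transform_def by auto

lemma node_msg_source_recode:
  assumes ok: "scheme_ok n a b Z s" and G: "G1 \<in> carrier_mat a a'" "G2 \<in> carrier_mat b b'"
    and Y: "Y1 \<in> carrier_mat a' d" "Y2 \<in> carrier_mat b' d"
  shows "node3_msg (source_recode G1 G2 Z Q3 Q4 s) Y1 Y2 = node3_msg s (G1 * Y1) (G2 * Y2)"
    "node4_msg (source_recode G1 G2 Z Q3 Q4 s) Y1 Y2 = node4_msg s (G1 * Y1) (G2 * Y2)"
  using scheme_ok_carriers[OF ok] G Y
  unfolding node3_msg_def node4_msg_def relay_msg_def source_recode_def lin_transform_def
  by (simp_all add: assoc_mult_mat[of _ Z a _ a' _ d] assoc_mult_mat[of _ Z b _ b' _ d])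

lemma msg_source_recode:
  assumes ok: "scheme_ok n a b Z s" and G: "G1 \<in> carrier_mat a a'" "G2 \<in> carrier_mat b b'"
    and Q: "Q3 \<in> carrier_mat n' n" "Q4 \<in> carrier_mat n' n" and X: "X \<in> carrier_mat n' d"
  shows "msg3 n' a' b' (source_recode G1 G2 Z Q3 Q4 s) * X
      = node3_msg s (G1 * (sel1 n' a' * X)) (G2 * (sel2 n' b' * X))"
    "msg4 n' a' b' (source_recode G1 G2 Z Q3 Q4 s) * X
      = node4_msg s (G1 * (sel1 n' a' * X)) (G2 * (sel2 n' b' * X))"
proof -
  have Y: "sel1 n' a' * X \<in> carrier_mat a' d" "sel2 n' b' * X \<in> carrier_mat b' d"
    using mult_carrier_mat[OF sel1_carrier X] mult_carrier_mat[OF sel2_carrier X] .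
  show "msg3 n' a' b' (source_recode G1 G2 Z Q3 Q4 s) * X
      = node3_msg s (G1 * (sel1 n' a' * X)) (G2 * (sel2 n' b' * X))"
    "msg4 n' a' b' (source_recode G1 G2 Z Q3 Q4 s) * X
      = node4_msg s (G1 * (sel1 n' a' * X)) (G2 * (sel2 n' b' * X))"
    using msg_mult[OF scheme_ok_source_recode[OF ok G Q] X] node_msg_source_recode[OF ok G Y]
    by simp_all
qed

lemma task_err_nonneg:
  assumes "psd_mat n Psi" "K \<in> carrier_mat m n" "D \<in> carrier_mat n k" "M \<in> carrier_mat k n"
  shows "0 \<le> task_err n Psi K D M"
  unfolding task_err_def Let_def using assms
  by (intro psd_mat_trace_nonneg psd_mat_congruence) auto

lemma total_loss_nonneg:
  assumes "psd_mat n Psi" "K3 \<in> carrier_mat m3 n" "K4 \<in> carrier_mat m4 n" "scheme_ok n a b Z s"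
  shows "0 \<le> total_loss n Psi a b K3 K4 s"
  unfolding total_loss_def using assms scheme_ok_carriers[OF assms(4)] msg_carrier[OF assms(4)]
  by (intro add_nonneg_nonneg task_err_nonneg) auto

lemma task_err_pullback_eq:
  fixes K B C Psi D M M' :: "real mat"
  assumes K: "K \<in> carrier_mat m n" and B: "B \<in> carrier_mat n n'" and C: "C \<in> carrier_mat n' n"
    and Psi: "Psi \<in> carrier_mat n n" "transpose_mat Psi = Psi"
    and D: "D \<in> carrier_mat n' k" and M: "M \<in> carrier_mat k n" and M': "M' \<in> carrier_mat k n'"
    and BC: "B * C * Psi = Psi" and MM': "M * Psi = M' * C * Psi"
  shows "task_err n Psi K (B * D) M = task_err n' (C * Psi * transpose_mat C) (K * B) D M'"
proof -
  note dims = carrier_matD[OF K] carrier_matD[OF B] carrier_matD[OF C] carrier_matD[OF Psi(1)]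
    carrier_matD[OF D] carrier_matD[OF M] carrier_matD[OF M']
  define R where "R = K * (1\<^sub>m n - B * D * M)"
  define R' where "R' = K * B * (1\<^sub>m n' - D * M')"
  have Rc: "R \<in> carrier_mat m n" and R'c: "R' \<in> carrier_mat m n'"
    unfolding R_def R'_def using K B D M M' by auto
  have "R * Psi = K * Psi - K * (B * (D * (M * Psi)))"
    unfolding R_def using dims by (simp add: mat_algebra_dims)
  also have "\<dots> = K * (B * (C * Psi)) - K * (B * (D * (M' * (C * Psi))))"
    using BC MM' dims by (simp add: assoc_mult_mat_dims)
  also have "\<dots> = R' * (C * Psi)"
    unfolding R'_def using dims by (simp add: mat_algebra_dims)
  finally have "R * Psi = R' * (C * Psi)" .
  then show ?thesis
    unfolding task_err_def Let_def R_def[symmetric] R'_def[symmetric]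
    using congruence_transfer[OF Rc R'c C Psi] by simp
qed

text \<open>The residual of the transported scheme is P times the old one, and an orthogonal
  projection does not increase the trace of a positive semidefinite matrix.\<close>
lemma task_err_pushforward_le:
  fixes K B Psi' D M Q P :: "real mat"
  assumes K: "K \<in> carrier_mat m n" and B: "B \<in> carrier_mat n n'" and Psi': "psd_mat n' Psi'"
    and D: "D \<in> carrier_mat n k" and M: "M \<in> carrier_mat k n" and Q: "Q \<in> carrier_mat n' n"
    and P: "orth_proj m P" and PKB: "P * (K * B) = K * B" and KBQ: "K * B * Q = P * K"
  shows "task_err n' Psi' (K * B) (Q * D) (M * B) \<le> task_err n (B * Psi' * transpose_mat B) K D M"
proof -
  have Psi'c: "Psi' \<in> carrier_mat n' n'" using psd_matD(1)[OF Psi'] .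
  have Pc: "P \<in> carrier_mat m m" "transpose_mat P = P" using P unfolding orth_proj_def by auto
  note dims = carrier_matD[OF K] carrier_matD[OF B] carrier_matD[OF Psi'c] carrier_matD[OF Pc(1)]
    carrier_matD[OF D] carrier_matD[OF M] carrier_matD[OF Q]
  define R where "R = K * (1\<^sub>m n - D * M)"
  define R' where "R' = K * B * (1\<^sub>m n' - Q * D * (M * B))"
  define X where "X = K * B - K * (D * (M * B))"
  have Rc: "R \<in> carrier_mat m n" unfolding R_def using K D M by auto
  have Xc: "X \<in> carrier_mat m n'" unfolding X_def using K B D M by auto
  have RB: "R * B = X"
    unfolding R_def X_def using dims by (simp add: mat_algebra_dims)
  have "R' = K * B - K * B * Q * (D * (M * B))"
    unfolding R'_def using dims by (simp add: mat_algebra_dims)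
  also have "\<dots> = P * X"
    unfolding KBQ X_def using PKB dims by (simp add: mat_algebra_dims)
  finally have R'X: "R' = P * X" .
  have "R * (B * Psi' * transpose_mat B) * transpose_mat R = (R * B) * Psi' * transpose_mat (R * B)"
    using transpose_mult[OF Rc B] dims carrier_matD[OF Rc] by (simp add: assoc_mult_mat_dims)
  then have "R * (B * Psi' * transpose_mat B) * transpose_mat R = X * Psi' * transpose_mat X"
    unfolding RB .
  moreover have "R' * Psi' * transpose_mat R' = P * (X * Psi' * transpose_mat X) * P"
    unfolding R'X using transpose_mult[OF Pc(1) Xc] Pc dims carrier_matD[OF Xc]
    by (simp add: assoc_mult_mat_dims)
  ultimately show ?thesis
    unfolding task_err_def Let_def R_def[symmetric] R'_def[symmetric]
    using orth_proj_trace_le[OF P psd_mat_congruence[OF Psi' Xc]] by simp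
qed

section \<open>Equivalent problems\<close>

locale min_transfer =
  fixes okA okB :: "'s \<Rightarrow> bool" and fA fB :: "'s \<Rightarrow> real" and T U :: "'s \<Rightarrow> 's"
  assumes T_ok: "okA s \<Longrightarrow> okB (T s)" and U_ok: "okB s \<Longrightarrow> okA (U s)"
    and T_le: "okA s \<Longrightarrow> fB (T s) \<le> fA s" and U_eq: "okB s \<Longrightarrow> fA (U s) = fB s"
begin

lemma T_minimizer:
  assumes "okA s" "\<forall>s'. okA s' \<longrightarrow> fA s \<le> fA s'"
  shows "okB (T s) \<and> (\<forall>s'. okB s' \<longrightarrow> fB (T s) \<le> fB s')"
proof (intro conjI allI impI)
  show "okB (T s)" using T_ok assms(1) .
  fix s' assume s': "okB s'"
  have "fB (T s) \<le> fA s" using T_le assms(1) .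
  also have "\<dots> \<le> fA (U s')" using assms(2) U_ok[OF s'] by simp
  finally show "fB (T s) \<le> fB s'" using U_eq[OF s'] by simp
qed

lemma U_minimizer:
  assumes "okB s" "\<forall>s'. okB s' \<longrightarrow> fB s \<le> fB s'"
  shows "okA (U s) \<and> (\<forall>s'. okA s' \<longrightarrow> fA (U s) \<le> fA s')"
proof (intro conjI allI impI)
  show "okA (U s)" using U_ok assms(1) .
  fix s' assume s': "okA s'"
  have "fA (U s) = fB s" using U_eq assms(1) .
  also have "\<dots> \<le> fB (T s')" using assms(2) T_ok[OF s'] by simp
  finally show "fA (U s) \<le> fA s'" using T_le[OF s'] by simp
qed

lemma Inf_eq:
  assumes ne: "okA s0" and bdd: "bdd_below {fA s | s. okA s}"
  shows "Inf {fA s | s. okA s} = Inf {fB s | s. okB s}"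
proof (rule antisym)
  have sub: "{fB s | s. okB s} \<subseteq> {fA s | s. okA s}" using U_ok U_eq by force
  show "Inf {fA s | s. okA s} \<le> Inf {fB s | s. okB s}"
    using T_ok[OF ne] by (intro cInf_superset_mono[OF _ bdd sub]) auto
  show "Inf {fB s | s. okB s} \<le> Inf {fA s | s. okA s}"
  proof (rule cInf_greatest)
    fix x assume "x \<in> {fA s | s. okA s}"
    then obtain s where s: "okA s" "x = fA s" by auto
    have "Inf {fB s | s. okB s} \<le> fB (T s)"
      using T_ok[OF s(1)] bdd_below_mono[OF bdd sub] by (intro cInf_lower) auto
    then show "Inf {fB s | s. okB s} \<le> x" using T_le[OF s(1)] s(2) by simp
  qed (use ne in auto)
qed

end

definition optimal_transfer :: "nat \<Rightarrow> nat \<Rightarrow> real mat \<Rightarrow> nat \<Rightarrow> nat \<Rightarrow> real mat \<Rightarrow> real mat \<Rightarrow>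
    nat \<Rightarrow> real mat \<Rightarrow> nat \<Rightarrow> nat \<Rightarrow> real mat \<Rightarrow> real mat \<Rightarrow> bool" where
  "optimal_transfer Z n Psi a b K3 K4 n' Psi' a' b' K3' K4' \<longleftrightarrow>
    (\<exists>P13 P15 P24 P25 P56 Q3 Q4. P13 \<in> carrier_mat a a' \<and> P15 \<in> carrier_mat a a' \<and>
       P24 \<in> carrier_mat b b' \<and> P25 \<in> carrier_mat b b' \<and> P56 \<in> carrier_mat (2 * Z) (2 * Z) \<and>
       Q3 \<in> carrier_mat n' n \<and> Q4 \<in> carrier_mat n' n \<and>
       (\<forall>s. optimal_scheme n Psi a b Z K3 K4 s \<longrightarrow>
          optimal_scheme n' Psi' a' b' Z K3' K4' (lin_transform P13 P15 P24 P25 P56 Q3 Q4 s)))"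

definition equiv_problem :: "nat \<Rightarrow> nat \<Rightarrow> real mat \<Rightarrow> nat \<Rightarrow> nat \<Rightarrow> real mat \<Rightarrow> real mat \<Rightarrow>
    nat \<Rightarrow> real mat \<Rightarrow> nat \<Rightarrow> nat \<Rightarrow> real mat \<Rightarrow> real mat \<Rightarrow> bool" where
  "equiv_problem Z n Psi a b K3 K4 n' Psi' a' b' K3' K4' \<longleftrightarrow>
    opt_loss n Psi a b Z K3 K4 = opt_loss n' Psi' a' b' Z K3' K4' \<and>
    optimal_transfer Z n Psi a b K3 K4 n' Psi' a' b' K3' K4' \<and>
    optimal_transfer Z n' Psi' a' b' K3' K4' n Psi a b K3 K4"

lemma lin_transform_lin_transform:
  assumes ok: "scheme_ok n a b Z s"
    and "P13 \<in> carrier_mat a a1" "P15 \<in> carrier_mat a a1" "P24 \<in> carrier_mat b b1"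
      "P25 \<in> carrier_mat b b1" "P56 \<in> carrier_mat (2 * Z) (2 * Z)"
      "Q3 \<in> carrier_mat n1 n" "Q4 \<in> carrier_mat n1 n"
    and "P13' \<in> carrier_mat a1 a2" "P15' \<in> carrier_mat a1 a2" "P24' \<in> carrier_mat b1 b2"
      "P25' \<in> carrier_mat b1 b2" "P56' \<in> carrier_mat (2 * Z) (2 * Z)"
      "Q3' \<in> carrier_mat n2 n1" "Q4' \<in> carrier_mat n2 n1"
  shows "lin_transform P13' P15' P24' P25' P56' Q3' Q4' (lin_transform P13 P15 P24 P25 P56 Q3 Q4 s)
    = lin_transform (P13 * P13') (P15 * P15') (P24 * P24') (P25 * P25') (P56 * P56')
        (Q3' * Q3) (Q4' * Q4) s"
  using scheme_ok_carriers[OF ok] assms(2-) unfolding lin_transform_def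
  by (simp add: assoc_mult_mat_dims)

lemma optimal_transfer_trans:
  assumes "optimal_transfer Z n Psi a b K3 K4 n1 Psi1 a1 b1 K31 K41"
    and "optimal_transfer Z n1 Psi1 a1 b1 K31 K41 n2 Psi2 a2 b2 K32 K42"
  shows "optimal_transfer Z n Psi a b K3 K4 n2 Psi2 a2 b2 K32 K42"
proof -
  obtain P13 P15 P24 P25 P56 Q3 Q4 where
    P: "P13 \<in> carrier_mat a a1" "P15 \<in> carrier_mat a a1" "P24 \<in> carrier_mat b b1"
      "P25 \<in> carrier_mat b b1" "P56 \<in> carrier_mat (2 * Z) (2 * Z)"
      "Q3 \<in> carrier_mat n1 n" "Q4 \<in> carrier_mat n1 n"
    and opt: "\<forall>s. optimal_scheme n Psi a b Z K3 K4 s \<longrightarrow>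
      optimal_scheme n1 Psi1 a1 b1 Z K31 K41 (lin_transform P13 P15 P24 P25 P56 Q3 Q4 s)"
    using assms(1) unfolding optimal_transfer_def by (elim exE conjE)
  obtain P13' P15' P24' P25' P56' Q3' Q4' where
    P': "P13' \<in> carrier_mat a1 a2" "P15' \<in> carrier_mat a1 a2" "P24' \<in> carrier_mat b1 b2"
      "P25' \<in> carrier_mat b1 b2" "P56' \<in> carrier_mat (2 * Z) (2 * Z)"
      "Q3' \<in> carrier_mat n2 n1" "Q4' \<in> carrier_mat n2 n1"
    and opt': "\<forall>s. optimal_scheme n1 Psi1 a1 b1 Z K31 K41 s \<longrightarrow>
      optimal_scheme n2 Psi2 a2 b2 Z K32 K42 (lin_transform P13' P15' P24' P25' P56' Q3' Q4' s)"
    using assms(2) unfolding optimal_transfer_def by (elim exE conjE)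
  have comp: "\<forall>s. optimal_scheme n Psi a b Z K3 K4 s \<longrightarrow>
      optimal_scheme n2 Psi2 a2 b2 Z K32 K42 (lin_transform (P13 * P13') (P15 * P15')
        (P24 * P24') (P25 * P25') (P56 * P56') (Q3' * Q3) (Q4' * Q4) s)"
  proof (intro allI impI)
    fix s assume s: "optimal_scheme n Psi a b Z K3 K4 s"
    then have "scheme_ok n a b Z s" unfolding optimal_scheme_def by blast
    then show "optimal_scheme n2 Psi2 a2 b2 Z K32 K42 (lin_transform (P13 * P13') (P15 * P15')
        (P24 * P24') (P25 * P25') (P56 * P56') (Q3' * Q3) (Q4' * Q4) s)"
      using opt'[rule_format, OF opt[rule_format, OF s]]
        lin_transform_lin_transform[of n a b Z s, OF _ P P']
      by simp
  qed
  have carriers: "P13 * P13' \<in> carrier_mat a a2" "P15 * P15' \<in> carrier_mat a a2"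
    "P24 * P24' \<in> carrier_mat b b2" "P25 * P25' \<in> carrier_mat b b2"
    "P56 * P56' \<in> carrier_mat (2 * Z) (2 * Z)"
    "Q3' * Q3 \<in> carrier_mat n2 n" "Q4' * Q4 \<in> carrier_mat n2 n"
    using P P' by auto
  show ?thesis
    unfolding optimal_transfer_def
    by (rule exI[of _ "P13 * P13'"], rule exI[of _ "P15 * P15'"], rule exI[of _ "P24 * P24'"],
        rule exI[of _ "P25 * P25'"], rule exI[of _ "P56 * P56'"], rule exI[of _ "Q3' * Q3"],
        rule exI[of _ "Q4' * Q4"]) (simp add: carriers comp)
qed

lemma equiv_problem_trans:
  assumes "equiv_problem Z n Psi a b K3 K4 n1 Psi1 a1 b1 K31 K41"
    and "equiv_problem Z n1 Psi1 a1 b1 K31 K41 n2 Psi2 a2 b2 K32 K42"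
  shows "equiv_problem Z n Psi a b K3 K4 n2 Psi2 a2 b2 K32 K42"
  using assms optimal_transfer_trans unfolding equiv_problem_def by metis

lemma equiv_problem_refl: "equiv_problem Z n Psi a b K3 K4 n Psi a b K3 K4"
proof -
  have "lin_transform (1\<^sub>m a) (1\<^sub>m a) (1\<^sub>m b) (1\<^sub>m b) (1\<^sub>m (2 * Z)) (1\<^sub>m n) (1\<^sub>m n) s = s"
    if "scheme_ok n a b Z s" for s
    using scheme_ok_carriers[OF that] unfolding lin_transform_def by simp
  then have "optimal_transfer Z n Psi a b K3 K4 n Psi a b K3 K4"
    unfolding optimal_transfer_def optimal_scheme_def by (intro exI[of _ "1\<^sub>m _"] conjI) auto
  then show ?thesis unfolding equiv_problem_def by simp
qed

text \<open>The reduction of TaskAwareCoding(n, Psi, a, b) to a problem in the variable x' = C x: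
  BC Psi = Psi says x = B x' almost surely, the zero pattern of B says that each source of the
  old problem is a function of the corresponding source of the new one, and the last two
  assumptions say the converse, via the matrices G1 and G2.\<close>
locale problem_reduction =
  fixes n a b n' a' b' :: nat and Psi B C G1 G2 :: "real mat"
  assumes psd: "psd_mat n Psi"
    and dims: "a \<le> n" "b \<le> n" "a' \<le> n'" "b' \<le> n'"
    and B: "B \<in> carrier_mat n n'" and C: "C \<in> carrier_mat n' n"
    and G1: "G1 \<in> carrier_mat a' a" and G2: "G2 \<in> carrier_mat b' b"
    and BC: "B * C * Psi = Psi"
    and B_block1: "\<And>i l. i < a \<Longrightarrow> l < n' \<Longrightarrow> a' \<le> l \<Longrightarrow> B $$ (i, l) = 0"
    and B_block2: "\<And>i l. i < n \<Longrightarrow> n - b \<le> i \<Longrightarrow> l < n' - b' \<Longrightarrow> B $$ (i, l) = 0"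
    and G1_sel: "G1 * sel1 n a * Psi = sel1 n' a' * C * Psi"
    and G2_sel: "G2 * sel2 n b * Psi = sel2 n' b' * C * Psi"
begin

abbreviation Psi' :: "real mat" where "Psi' \<equiv> C * Psi * transpose_mat C"

lemma Psi_carrier: "Psi \<in> carrier_mat n n" "transpose_mat Psi = Psi"
  using psd_matD[OF psd] by auto

lemma Psi_eq: "Psi = B * Psi' * transpose_mat B"
proof -
  note dims = carrier_matD[OF B] carrier_matD[OF C] carrier_matD[OF Psi_carrier(1)]
  have "B * Psi' * transpose_mat B = B * C * Psi * transpose_mat (B * C)"
    using transpose_mult[OF B C] dims by (simp add: assoc_mult_mat_dims)
  also have "\<dots> = Psi * transpose_mat (B * C)" unfolding BC ..
  also have "\<dots> = transpose_mat (B * C * Psi)"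
    using transpose_mult[of "B * C" n n Psi n] B C Psi_carrier by simp
  finally show ?thesis unfolding BC using Psi_carrier by simp
qed

lemma msg_forward:
  assumes ok: "scheme_ok n a b Z s"
    and A: "A1 \<in> carrier_mat a a'" "A2 \<in> carrier_mat b b'"
      "A1 * sel1 n' a' = sel1 n a * B" "A2 * sel2 n' b' = sel2 n b * B"
    and Q: "Q3 \<in> carrier_mat n' n" "Q4 \<in> carrier_mat n' n"
  shows "msg3 n' a' b' (source_recode A1 A2 Z Q3 Q4 s) = msg3 n a b s * B"
    "msg4 n' a' b' (source_recode A1 A2 Z Q3 Q4 s) = msg4 n a b s * B"
  using msg_source_recode[OF ok A(1,2) Q one_carrier_mat] msg_mult[OF ok B] A
    msg_carrier[OF scheme_ok_source_recode[OF ok A(1,2) Q]]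
  by (simp_all add: assoc_mult_mat_dims)

lemma msg_backward:
  assumes ok: "scheme_ok n' a' b' Z s"
  shows "msg3 n a b (source_recode G1 G2 Z B B s) * Psi = msg3 n' a' b' s * (C * Psi)"
    "msg4 n a b (source_recode G1 G2 Z B B s) * Psi = msg4 n' a' b' s * (C * Psi)"
proof -
  have "G1 * (sel1 n a * Psi) = sel1 n' a' * (C * Psi)"
    "G2 * (sel2 n b * Psi) = sel2 n' b' * (C * Psi)"
    using G1_sel G2_sel G1 G2 C Psi_carrier by (simp_all add: assoc_mult_mat_dims)
  then show "msg3 n a b (source_recode G1 G2 Z B B s) * Psi = msg3 n' a' b' s * (C * Psi)"
    "msg4 n a b (source_recode G1 G2 Z B B s) * Psi = msg4 n' a' b' s * (C * Psi)"
    using msg_source_recode[OF ok G1 G2 B B Psi_carrier(1)] msg_mult[OF ok, of "C * Psi" n]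
      C Psi_carrier
    by simp_all
qed

lemma psd_Psi': "psd_mat n' Psi'"
  using psd_mat_congruence[OF psd C] .

lemma total_loss_forward_le:
  assumes ok: "scheme_ok n a b Z s"
    and A: "A1 \<in> carrier_mat a a'" "A2 \<in> carrier_mat b b'"
      "A1 * sel1 n' a' = sel1 n a * B" "A2 * sel2 n' b' = sel2 n b * B"
    and K3: "K3 \<in> carrier_mat m3 n" and Q3: "Q3 \<in> carrier_mat n' n" "orth_proj m3 P3"
      "P3 * (K3 * B) = K3 * B" "K3 * B * Q3 = P3 * K3"
    and K4: "K4 \<in> carrier_mat m4 n" and Q4: "Q4 \<in> carrier_mat n' n" "orth_proj m4 P4"
      "P4 * (K4 * B) = K4 * B" "K4 * B * Q4 = P4 * K4"
  shows "total_loss n' Psi' a' b' (K3 * B) (K4 * B) (source_recode A1 A2 Z Q3 Q4 s)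
    \<le> total_loss n Psi a b K3 K4 s"
proof -
  note c = scheme_ok_carriers[OF ok] and mc = msg_carrier[OF ok]
  have "D3 (source_recode A1 A2 Z Q3 Q4 s) = Q3 * D3 s"
    "D4 (source_recode A1 A2 Z Q3 Q4 s) = Q4 * D4 s"
    by (simp_all add: source_recode_def lin_transform_def)
  then show ?thesis
    unfolding total_loss_def msg_forward[OF ok A Q3(1) Q4(1)]
    using task_err_pushforward_le[OF K3 B psd_Psi' c(6) mc(1) Q3, folded Psi_eq]
      task_err_pushforward_le[OF K4 B psd_Psi' c(7) mc(2) Q4, folded Psi_eq]
    by simp
qed

lemma total_loss_backward_eq:
  assumes ok: "scheme_ok n' a' b' Z s"
    and K3: "K3 \<in> carrier_mat m3 n" and K4: "K4 \<in> carrier_mat m4 n"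
  shows "total_loss n Psi a b K3 K4 (source_recode G1 G2 Z B B s)
    = total_loss n' Psi' a' b' (K3 * B) (K4 * B) s"
proof -
  note c = scheme_ok_carriers[OF ok] and mc = msg_carrier[OF ok]
  note mcU = msg_carrier[OF scheme_ok_source_recode[OF ok G1 G2 B B]]
  have msg: "msg3 n a b (source_recode G1 G2 Z B B s) * Psi = msg3 n' a' b' s * C * Psi"
    "msg4 n a b (source_recode G1 G2 Z B B s) * Psi = msg4 n' a' b' s * C * Psi"
    using msg_backward[OF ok] mc C Psi_carrier by (simp_all add: assoc_mult_mat_dims)
  have "D3 (source_recode G1 G2 Z B B s) = B * D3 s" "D4 (source_recode G1 G2 Z B B s) = B * D4 s"
    by (simp_all add: source_recode_def lin_transform_def)
  then show ?thesis
    unfolding total_loss_def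
    using task_err_pullback_eq[OF K3 B C Psi_carrier c(6) mcU(1) mc(1) BC msg(1)]
      task_err_pullback_eq[OF K4 B C Psi_carrier c(7) mcU(2) mc(2) BC msg(2)]
    by simp
qed

theorem equivalent:
  assumes K3: "K3 \<in> carrier_mat m3 n" and K4: "K4 \<in> carrier_mat m4 n"
  shows "equiv_problem Z n Psi a b K3 K4 n' Psi' a' b' (K3 * B) (K4 * B)"
proof -
  define A1 where "A1 = mat a a' (\<lambda>(i, t). B $$ (i, t))"
  define A2 where "A2 = mat b b' (\<lambda>(i, t). B $$ (n - b + i, n' - b' + t))"
  have A: "A1 \<in> carrier_mat a a'" "A2 \<in> carrier_mat b b'"
    "A1 * sel1 n' a' = sel1 n a * B" "A2 * sel2 n' b' = sel2 n b * B"
    unfolding A1_def A2_def using sel_mult_block[OF B] dims B_block1 B_block2 by auto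
  obtain Q3 P3 where Q3: "Q3 \<in> carrier_mat n' n" "orth_proj m3 P3"
    "P3 * (K3 * B) = K3 * B" "K3 * B * Q3 = P3 * K3"
    using decoder_correction_exists[OF K3 B] by blast
  obtain Q4 P4 where Q4: "Q4 \<in> carrier_mat n' n" "orth_proj m4 P4"
    "P4 * (K4 * B) = K4 * B" "K4 * B * Q4 = P4 * K4"
    using decoder_correction_exists[OF K4 B] by blast
  interpret min_transfer "scheme_ok n a b Z" "scheme_ok n' a' b' Z" "total_loss n Psi a b K3 K4"
      "total_loss n' Psi' a' b' (K3 * B) (K4 * B)" "source_recode A1 A2 Z Q3 Q4"
      "source_recode G1 G2 Z B B"
    using scheme_ok_source_recode[OF _ A(1,2) Q3(1) Q4(1)] scheme_ok_source_recode[OF _ G1 G2 B B]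
      total_loss_forward_le[OF _ A K3 Q3 K4 Q4] total_loss_backward_eq[OF _ K3 K4]
    by unfold_locales auto
  obtain s0 where "scheme_ok n a b Z s0" using scheme_ok_exists by blast
  moreover have "bdd_below {total_loss n Psi a b K3 K4 s | s. scheme_ok n a b Z s}"
    using total_loss_nonneg[OF psd K3 K4] by (intro bdd_belowI[of _ 0]) auto
  ultimately have "opt_loss n Psi a b Z K3 K4 = opt_loss n' Psi' a' b' Z (K3 * B) (K4 * B)"
    unfolding opt_loss_def by (rule Inf_eq)
  moreover have "optimal_transfer Z n Psi a b K3 K4 n' Psi' a' b' (K3 * B) (K4 * B)"
    unfolding optimal_transfer_def optimal_scheme_def
    by (rule exI[of _ A1], rule exI[of _ A1], rule exI[of _ A2], rule exI[of _ A2],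
        rule exI[of _ "1\<^sub>m (2 * Z)"], rule exI[of _ Q3], rule exI[of _ Q4])
      (use A Q3 Q4 T_minimizer[unfolded source_recode_def] in auto)
  moreover have "optimal_transfer Z n' Psi' a' b' (K3 * B) (K4 * B) n Psi a b K3 K4"
    unfolding optimal_transfer_def optimal_scheme_def
    by (rule exI[of _ G1], rule exI[of _ G1], rule exI[of _ G2], rule exI[of _ G2],
        rule exI[of _ "1\<^sub>m (2 * Z)"], rule exI[of _ B], rule exI[of _ B])
      (use G1 G2 B U_minimizer[unfolded source_recode_def] in auto)
  ultimately show ?thesis unfolding equiv_problem_def by blast
qed

end

section \<open>Removing a kernel direction of the covariance\<close>

locale kernel_vector =
  fixes n :: nat and Psi :: "real mat" and v :: "real vec"
  assumes psd: "psd_mat n Psi" and v: "v \<in> carrier_vec n" and Psi_v: "Psi *\<^sub>v v = 0\<^sub>v n"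
begin

lemma mult_Psi_rank_one:
  assumes X: "X \<in> carrier_mat q n" and Y: "Y \<in> carrier_mat q n"
    and XY: "\<And>i l. i < q \<Longrightarrow> l < n \<Longrightarrow> X $$ (i, l) = Y $$ (i, l) + y i * v $ l"
  shows "X * Psi = Y * Psi"
proof -
  note Psi = psd_matD(1,2)[OF psd]
  have "X = Y + outer_prod (vec q y) v"
    using XY X Y v by (intro eq_matI) (auto simp: outer_prod_def)
  then show ?thesis
    using outer_prod_mult[of Psi n n v "vec q y"] Psi Psi_v Y v
    by (simp add: add_mult_distrib_mat[of _ q n])
qed

lemma mult_Psi_sel_eq:
  assumes G: "G \<in> carrier_mat r s" and H: "H \<in> carrier_mat r n" and "s \<le> n"
  shows "(\<And>i l. i < r \<Longrightarrow> l < n \<Longrightarrow> (if l < s then G $$ (i, l) else 0) = H $$ (i, l) + y i * v $ l)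
      \<Longrightarrow> G * sel1 n s * Psi = H * Psi"
    and "(\<And>i l. i < r \<Longrightarrow> l < n \<Longrightarrow>
        (if n - s \<le> l then G $$ (i, l - (n - s)) else 0) = H $$ (i, l) + y i * v $ l)
      \<Longrightarrow> G * sel2 n s * Psi = H * Psi"
  using mult_Psi_rank_one[of "G * sel1 n s" r H y] mult_Psi_rank_one[of "G * sel2 n s" r H y]
    index_mult_sel[of _ G] assms by auto

end

text \<open>As v^T x = 0 almost surely and v_j \<noteq> 0, the coordinate x_j is a linear combination of
  the others and is dropped (skip maps new indices to old ones). The support conditions make
  every source that observes x_j also observe all coordinates of that combination.\<close>
locale kernel_deletion = kernel_vector +
  fixes a b j :: nat
  assumes j: "j < n" "v $ j \<noteq> 0"
    and dims: "a \<le> n" "b \<le> n" "n \<le> a + b"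
    and supp1: "j < a \<Longrightarrow> a \<le> l \<Longrightarrow> l < n \<Longrightarrow> v $ l = 0"
    and supp2: "n - b \<le> j \<Longrightarrow> l < n - b \<Longrightarrow> v $ l = 0"
begin

definition skip :: "nat \<Rightarrow> nat" where
  "skip i = (if i < j then i else Suc i)"

definition a_del :: nat where "a_del = (if j < a then a - 1 else a)"
definition b_del :: nat where "b_del = (if n - b \<le> j then b - 1 else b)"

definition delete_B :: "real mat" where
  "delete_B = mat n (n - 1)
    (\<lambda>(l, i). if l = j then - v $ skip i / v $ j else if l = skip i then 1 else 0)"

definition delete_C :: "real mat" where
  "delete_C = mat (n - 1) n (\<lambda>(i, l). if l = skip i then 1 else 0)"

definition delete_G1 :: "real mat" where
  "delete_G1 = mat a_del a (\<lambda>(i, l). if l = skip i then 1 else 0)"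

definition delete_G2 :: "real mat" where
  "delete_G2 = mat b_del b (\<lambda>(i, q). if n - b + q = skip (n - 1 - b_del + i) then 1 else 0)"

lemma new_dims: "a_del \<le> n - 1" "b_del \<le> n - 1" "n - 1 \<le> a_del + b_del"
  "2 * (n - 1) - b_del < 2 * n - b"
  using j dims unfolding a_del_def b_del_def by auto

lemma skip_bounds:
  "i < a_del \<Longrightarrow> skip i < a"
  "i < b_del \<Longrightarrow> n - b \<le> skip (n - 1 - b_del + i)"
  "i < b_del \<Longrightarrow> n - 1 - b_del + i < n - 1"
  using j dims unfolding a_del_def b_del_def skip_def
  by (cases "j < a"; cases "n - b \<le> j"; auto)+

lemma delete_carriers:
  "delete_B \<in> carrier_mat n (n - 1)" "delete_C \<in> carrier_mat (n - 1) n"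
  "delete_G1 \<in> carrier_mat a_del a" "delete_G2 \<in> carrier_mat b_del b"
  unfolding delete_B_def delete_C_def delete_G1_def delete_G2_def by auto

lemma BC_Psi: "delete_B * delete_C * Psi = Psi"
proof -
  have BC: "delete_B * delete_C \<in> carrier_mat n n"
    using delete_carriers(1,2) by (rule mult_carrier_mat)
  have entry: "(delete_B * delete_C) $$ (l, k)
      = 1\<^sub>m n $$ (l, k) + (if l = j then - 1 / v $ j else 0) * v $ k"
    if lk: "l < n" "k < n" for l k
  proof -
    define idx where "idx = (if k < j then k else k - 1)"
    have "(delete_B * delete_C) $$ (l, k) = (\<Sum>i<n - 1.
        (if l = j then - v $ skip i / v $ j else if l = skip i then 1 else 0)
        * (if k = skip i then 1 else 0))"
      unfolding delete_B_def delete_C_def using lk by (subst index_mat_mult_mat) simp_all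
    also have "\<dots> = (\<Sum>i<n - 1. if i = idx then
        (if k \<noteq> j then (if l = j then - v $ k / v $ j else if l = k then 1 else 0) else 0) else 0)"
      by (rule sum.cong) (auto simp: skip_def idx_def)
    also have "\<dots> = 1\<^sub>m n $$ (l, k) + (if l = j then - 1 / v $ j else 0) * v $ k"
      using lk j by (subst sum.delta) (auto simp: idx_def)
    finally show ?thesis .
  qed
  have "delete_B * delete_C * Psi = 1\<^sub>m n * Psi"
    by (rule mult_Psi_rank_one[OF BC one_carrier_mat entry])
  then show ?thesis using psd_matD(1)[OF psd] by simp
qed

lemma B_blocks:
  "i < a \<Longrightarrow> l < n - 1 \<Longrightarrow> a_del \<le> l \<Longrightarrow> delete_B $$ (i, l) = 0"
  "i < n \<Longrightarrow> n - b \<le> i \<Longrightarrow> l < n - 1 - b_del \<Longrightarrow> delete_B $$ (i, l) = 0"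
  using supp1[of "Suc l"] supp2[of l] j dims
  unfolding delete_B_def a_del_def b_del_def skip_def by (auto split: if_splits)

lemma G1_sel: "delete_G1 * sel1 n a * Psi = sel1 (n - 1) a_del * delete_C * Psi"
proof (rule mult_Psi_sel_eq(1)[OF delete_carriers(3) _ dims(1), where y = "\<lambda>_. 0"])
  fix i l assume il: "i < a_del" "l < n"
  then have "(sel1 (n - 1) a_del * delete_C) $$ (i, l) = delete_C $$ (i, l)"
    using index_sel_mult(1)[OF delete_carriers(2)] new_dims by blast
  then show "(if l < a then delete_G1 $$ (i, l) else 0)
      = (sel1 (n - 1) a_del * delete_C) $$ (i, l) + 0 * v $ l"
    using il new_dims skip_bounds(1)[OF il(1)] by (auto simp: delete_G1_def delete_C_def)
qed (use delete_carriers new_dims in auto)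

lemma G2_sel: "delete_G2 * sel2 n b * Psi = sel2 (n - 1) b_del * delete_C * Psi"
proof (rule mult_Psi_sel_eq(2)[OF delete_carriers(4) _ dims(2), where y = "\<lambda>_. 0"])
  fix i l assume il: "i < b_del" "l < n"
  have "(sel2 (n - 1) b_del * delete_C) $$ (i, l) = delete_C $$ (n - 1 - b_del + i, l)"
    using index_sel_mult(2)[OF delete_carriers(2)] new_dims il by blast
  also have "\<dots> = (if l = skip (n - 1 - b_del + i) then 1 else 0)"
    using skip_bounds(3)[OF il(1)] il unfolding delete_C_def by simp
  finally have H: "(sel2 (n - 1) b_del * delete_C) $$ (i, l)
      = (if l = skip (n - 1 - b_del + i) then 1 else 0)" .
  show "(if n - b \<le> l then delete_G2 $$ (i, l - (n - b)) else 0)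
      = (sel2 (n - 1) b_del * delete_C) $$ (i, l) + 0 * v $ l"
  proof (cases "n - b \<le> l")
    case True
    then have "l - (n - b) < b" "n - b + (l - (n - b)) = l" using il dims by auto
    then show ?thesis unfolding H using True il by (simp add: delete_G2_def)
  next
    case False
    then show ?thesis unfolding H using skip_bounds(2)[OF il(1)] by auto
  qed
qed (use delete_carriers new_dims in auto)

lemma reduction:
  "problem_reduction n a b (n - 1) a_del b_del Psi delete_B delete_C delete_G1 delete_G2"
  unfolding problem_reduction_def
  using psd dims new_dims delete_carriers BC_Psi B_blocks G1_sel G2_sel by blast

end

text \<open>The coordinate at the pivot n - b - 1 is replaced by minus the part of v^T x on the
  coordinates \<ge> a, which the second source observes; almost surely it equals the part on the
  coordinates < a, which the first source observes, so the second source can take it over and b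
  grows by one. The old pivot coordinate moves to position j, and x_j is recovered from the new
  pivot coordinate because v_j \<noteq> 0.\<close>
locale kernel_absorption = kernel_vector +
  fixes a b j :: nat
  assumes j: "j < n - b" "v $ j \<noteq> 0"
    and dims: "a \<le> n" "b < n" "n \<le> a + b"
begin

definition pivot :: nat where "pivot = n - b - 1"

definition swap :: "nat \<Rightarrow> nat" where
  "swap i = (if i = j then pivot else if i = pivot then j else i)"

definition absorb_Bf :: "nat \<times> nat \<Rightarrow> real" where
  "absorb_Bf = (\<lambda>(l, i). if l = j then
      (if i = pivot then 1 / v $ j else if swap i < a then - v $ swap i / v $ j else 0)
    else if i = swap l then 1 else 0)"

definition absorb_Cf :: "nat \<times> nat \<Rightarrow> real" where
  "absorb_Cf = (\<lambda>(i, l). if i = pivot then (if a \<le> l then - v $ l else 0)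
    else if l = swap i then 1 else 0)"

definition absorb_G1 :: "real mat" where
  "absorb_G1 = mat a a (\<lambda>(i, l). if i = pivot then v $ l else if l = swap i then 1 else 0)"

definition absorb_G2 :: "real mat" where
  "absorb_G2 = mat (Suc b) b (\<lambda>(i, q).
    if i = 0 then (if a \<le> n - b + q then - v $ (n - b + q) else 0)
    else if q = i - 1 then 1 else 0)"

lemma pivot_bounds: "j \<le> pivot" "pivot < n - b" "pivot < a" "pivot < n"
  using j dims unfolding pivot_def by auto

lemma swap_swap [simp]: "swap (swap i) = i"
  unfolding swap_def by auto

lemma swap_less: "i < a \<Longrightarrow> swap i < a" "i < n \<Longrightarrow> swap i < n"
  using pivot_bounds j dims unfolding swap_def by auto

lemma new_dims: "a \<le> n" "Suc b \<le> n" "n \<le> a + Suc b" "2 * n - Suc b < 2 * n - b"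
  using dims by auto

lemma BC_entry_off_j:
  assumes "l < n" "k < n" "l \<noteq> j"
  shows "(\<Sum>i<n. absorb_Bf (l, i) * absorb_Cf (i, k)) = 1\<^sub>m n $$ (l, k)"
proof -
  have "(\<Sum>i<n. absorb_Bf (l, i) * absorb_Cf (i, k))
      = (\<Sum>i<n. if i = swap l then absorb_Cf (i, k) else 0)"
    using assms by (intro sum.cong) (auto simp: absorb_Bf_def)
  also have "\<dots> = absorb_Cf (swap l, k)"
    using swap_less(2)[OF assms(1)] by (simp add: sum.delta')
  also have "\<dots> = 1\<^sub>m n $$ (l, k)"
    using assms swap_swap[of l] unfolding absorb_Cf_def swap_def by auto
  finally show ?thesis .
qed

lemma BC_entry_j:
  assumes k: "k < n"
  shows "(\<Sum>i<n. absorb_Bf (j, i) * absorb_Cf (i, k)) = 1\<^sub>m n $$ (j, k) + (- 1 / v $ j) * v $ k"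
proof -
  have "(\<Sum>i<n. absorb_Bf (j, i) * absorb_Cf (i, k)) = (\<Sum>i<n.
      (if i = pivot then absorb_Cf (pivot, k) / v $ j else 0)
      + (if i = swap k then (if k < a \<and> k \<noteq> j then - v $ k / v $ j else 0) else 0))"
  proof (rule sum.cong)
    fix i assume "i \<in> {..<n}"
    show "absorb_Bf (j, i) * absorb_Cf (i, k)
        = (if i = pivot then absorb_Cf (pivot, k) / v $ j else 0)
        + (if i = swap k then (if k < a \<and> k \<noteq> j then - v $ k / v $ j else 0) else 0)"
    proof (cases "i = pivot")
      case True
      then show ?thesis using pivot_bounds unfolding absorb_Bf_def swap_def by auto
    next
      case False
      have "i = swap k \<longleftrightarrow> k = swap i" by (metis swap_swap)
      moreover have "swap i \<noteq> j" using False unfolding swap_def by auto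
      ultimately show ?thesis using False unfolding absorb_Bf_def absorb_Cf_def by auto
    qed
  qed simp
  also have "\<dots> = absorb_Cf (pivot, k) / v $ j + (if k < a \<and> k \<noteq> j then - v $ k / v $ j else 0)"
    using pivot_bounds swap_less(2)[OF k] by (simp add: sum.distrib)
  also have "\<dots> = 1\<^sub>m n $$ (j, k) + (- 1 / v $ j) * v $ k"
    using j k pivot_bounds unfolding absorb_Cf_def by auto
  finally show ?thesis .
qed

lemma BC_Psi: "mat n n absorb_Bf * mat n n absorb_Cf * Psi = Psi"
proof -
  have "mat n n absorb_Bf * mat n n absorb_Cf * Psi = 1\<^sub>m n * Psi"
  proof (rule mult_Psi_rank_one[where y = "\<lambda>l. if l = j then - 1 / v $ j else 0"])
    fix l k assume lk: "l < n" "k < n"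
    have "(mat n n absorb_Bf * mat n n absorb_Cf) $$ (l, k)
        = (\<Sum>i<n. absorb_Bf (l, i) * absorb_Cf (i, k))"
      by (rule index_mat_mult_mat[OF lk])
    then show "(mat n n absorb_Bf * mat n n absorb_Cf) $$ (l, k)
        = 1\<^sub>m n $$ (l, k) + (if l = j then - 1 / v $ j else 0) * v $ k"
      using BC_entry_off_j[OF lk] BC_entry_j[OF lk(2)] by (cases "l = j") simp_all
  qed auto
  then show ?thesis using psd_matD(1)[OF psd] by simp
qed

lemma B_blocks:
  "i < a \<Longrightarrow> l < n \<Longrightarrow> a \<le> l \<Longrightarrow> mat n n absorb_Bf $$ (i, l) = 0"
  "i < n \<Longrightarrow> n - b \<le> i \<Longrightarrow> l < n - Suc b \<Longrightarrow> mat n n absorb_Bf $$ (i, l) = 0"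
  using pivot_bounds swap_less(1)[of i] j unfolding absorb_Bf_def swap_def pivot_def by auto

lemma G1_sel: "absorb_G1 * sel1 n a * Psi = sel1 n a * mat n n absorb_Cf * Psi"
proof (rule mult_Psi_sel_eq(1)[where y = "\<lambda>i. if i = pivot then 1 else 0"])
  fix i l assume il: "i < a" "l < n"
  have "(sel1 n a * mat n n absorb_Cf) $$ (i, l) = absorb_Cf (i, l)"
    using index_sel_mult(1)[of "mat n n absorb_Cf" n n l i a] il dims by simp
  then show "(if l < a then absorb_G1 $$ (i, l) else 0)
      = (sel1 n a * mat n n absorb_Cf) $$ (i, l) + (if i = pivot then 1 else 0) * v $ l"
    using il swap_less(1)[OF il(1)] unfolding absorb_G1_def absorb_Cf_def by auto
qed (use dims in \<open>auto simp: absorb_G1_def\<close>)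

lemma G2_sel: "absorb_G2 * sel2 n b * Psi = sel2 n (Suc b) * mat n n absorb_Cf * Psi"
proof (rule mult_Psi_sel_eq(2)[where y = "\<lambda>_. 0"])
  fix i l assume il: "i < Suc b" "l < n"
  have idx: "n - Suc b + i = pivot + i" "pivot + i < n" using il dims unfolding pivot_def by auto
  have H: "(sel2 n (Suc b) * mat n n absorb_Cf) $$ (i, l) = absorb_Cf (pivot + i, l)"
    using index_sel_mult(2)[of "mat n n absorb_Cf" n n l i "Suc b"] il idx new_dims by simp
  show "(if n - b \<le> l then absorb_G2 $$ (i, l - (n - b)) else 0)
      = (sel2 n (Suc b) * mat n n absorb_Cf) $$ (i, l) + 0 * v $ l"
  proof (cases "i = 0")
    case True
    have "absorb_G2 $$ (i, l - (n - b)) = (if a \<le> l then - v $ l else 0)" if "n - b \<le> l"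
    proof -
      have "l - (n - b) < b" "n - b + (l - (n - b)) = l" using il that dims by auto
      then show ?thesis using True unfolding absorb_G2_def by simp
    qed
    then show ?thesis unfolding H using True dims by (auto simp: absorb_Cf_def)
  next
    case False
    have "swap (pivot + i) = pivot + i" using False pivot_bounds unfolding swap_def by auto
    then have "absorb_Cf (pivot + i, l) = (if l = pivot + i then 1 else 0)"
      using False unfolding absorb_Cf_def by simp
    moreover have "absorb_G2 $$ (i, l - (n - b)) = (if l = pivot + i then 1 else 0)" if "n - b \<le> l"
    proof -
      have "l - (n - b) < b" using il that dims by auto
      moreover have "l - (n - b) = i - 1 \<longleftrightarrow> l = pivot + i"
        using that False dims unfolding pivot_def by auto
      ultimately show ?thesis using False il unfolding absorb_G2_def by simp
    qed
    moreover have "l \<noteq> pivot + i" if "\<not> n - b \<le> l" using that dims False unfolding pivot_def by auto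
    ultimately show ?thesis unfolding H by auto
  qed
qed (use dims in \<open>auto simp: absorb_G2_def\<close>)

lemma reduction:
  "problem_reduction n a b n a (Suc b) Psi
    (mat n n absorb_Bf) (mat n n absorb_Cf) absorb_G1 absorb_G2"
proof -
  have "absorb_G1 \<in> carrier_mat a a" "absorb_G2 \<in> carrier_mat (Suc b) b"
    unfolding absorb_G1_def absorb_G2_def by auto
  then show ?thesis
    unfolding problem_reduction_def using psd dims new_dims BC_Psi B_blocks G1_sel G2_sel
    by (auto simp del: One_nat_def)
qed

end

lemma singular_problem_reduces:
  fixes Psi :: "real mat"
  assumes psd: "psd_mat n Psi" and sing: "det Psi = 0" and dims: "a \<le> n" "b \<le> n" "n \<le> a + b"
  shows "\<exists>n' a' b' B C G1 G2. max a' b' \<le> n' \<and> n' \<le> a' + b' \<and> 2 * n' - b' < 2 * n - b \<and>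
    problem_reduction n a b n' a' b' Psi B C G1 G2"
proof -
  obtain v where v: "v \<in> carrier_vec n" "v \<noteq> 0\<^sub>v n" "Psi *\<^sub>v v = 0\<^sub>v n"
    using det_0_iff_vec_prod_zero_field[OF psd_matD(1)[OF psd]] sing by blast
  have deletion: ?thesis if "kernel_deletion n Psi v a b j" for j
    using kernel_deletion.reduction[OF that] kernel_deletion.new_dims[OF that] by fastforce
  have absorption: ?thesis if "kernel_absorption n Psi v a b j" for j
    using kernel_absorption.reduction[OF that] kernel_absorption.new_dims[OF that] by fastforce
  consider (both) k j where "a \<le> k" "k < n" "v $ k \<noteq> 0" "j < n - b" "v $ j \<noteq> 0"
    | (src2) k where "a \<le> k" "k < n" "v $ k \<noteq> 0" "\<forall>l < n - b. v $ l = 0"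
    | (src1) "\<forall>l. a \<le> l \<and> l < n \<longrightarrow> v $ l = 0"
    by blast
  then show ?thesis
  proof cases
    case (both k j)
    then show ?thesis by (intro absorption[of j], unfold_locales) (use psd dims v in auto)
  next
    case (src2 k)
    then show ?thesis by (intro deletion[of k], unfold_locales) (use psd dims v in auto)
  next
    case src1
    have "\<exists>i. v $ i \<noteq> 0 \<and> i < n"
      using v(1,2) by (metis eq_vecI carrier_vecD index_zero_vec)
    then obtain i where i: "v $ i \<noteq> 0" "i < n" by blast
    define j where "j = (LEAST i. v $ i \<noteq> 0)"
    have "v $ j \<noteq> 0" unfolding j_def using i(1) by (rule LeastI)
    moreover have "j \<le> i" unfolding j_def using i(1) by (rule Least_le)
    moreover have "v $ l = 0" if "l < j" for l
      using not_less_Least[OF that[unfolded j_def]] by blast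
    ultimately show ?thesis
      by (intro deletion[of j], unfold_locales) (use psd src1 dims v i(2) in auto)
  qed
qed

lemma reduce_to_full_rank:
  fixes Psi K3 K4 :: "real mat"
  assumes "max a b \<le> n" "n \<le> a + b" "psd_mat n Psi" "K3 \<in> carrier_mat m3 n" "K4 \<in> carrier_mat m4 n"
  shows "\<exists>n' a' b' Psi' K3' K4'. max a' b' \<le> n' \<and> n' \<le> a' + b' \<and>
    psd_mat n' Psi' \<and> vec_space.rank n' Psi' = n' \<and>
    K3' \<in> carrier_mat m3 n' \<and> K4' \<in> carrier_mat m4 n' \<and>
    equiv_problem Z n Psi a b K3 K4 n' Psi' a' b' K3' K4'"
  using assms
proof (induction "2 * n - b" arbitrary: n a b Psi K3 K4 rule: less_induct)
  case less
  note psd = less.prems(3) and K = less.prems(4,5)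
  show ?case
  proof (cases "det Psi = 0")
    case False
    then have rank: "vec_space.rank n Psi = n"
      by (rule vec_space.low_rank_det_zero[OF psd_matD(1)[OF psd]])
    show ?thesis
      by (rule exI[of _ n], rule exI[of _ a], rule exI[of _ b], rule exI[of _ Psi],
          rule exI[of _ K3], rule exI[of _ K4]) (use rank less.prems equiv_problem_refl in simp)
  next
    case True
    have "a \<le> n" "b \<le> n" using less.prems(1) by auto
    then obtain n' a' b' B C G1 G2 where
      dims': "max a' b' \<le> n'" "n' \<le> a' + b'" "2 * n' - b' < 2 * n - b"
      and red: "problem_reduction n a b n' a' b' Psi B C G1 G2"
      using singular_problem_reduces[OF psd True _ _ less.prems(2)] by blast
    interpret problem_reduction n a b n' a' b' Psi B C G1 G2 by (rule red)
    have "K3 * B \<in> carrier_mat m3 n'" "K4 * B \<in> carrier_mat m4 n'" using K B by auto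
    from less.hyps[OF dims'(3) dims'(1,2) psd_Psi' this] obtain n'' a'' b'' Psi'' K3'' K4''
      where "max a'' b'' \<le> n''" "n'' \<le> a'' + b''" "psd_mat n'' Psi''"
        "vec_space.rank n'' Psi'' = n''"
        "K3'' \<in> carrier_mat m3 n''" "K4'' \<in> carrier_mat m4 n''"
        and "equiv_problem Z n' Psi' a' b' (K3 * B) (K4 * B) n'' Psi'' a'' b'' K3'' K4''"
      by blast
    with equiv_problem_trans[OF equivalent[OF K]] show ?thesis by blast
  qed
qed

theorem theorem1:
  fixes n a b Z m3 m4 :: nat and Psi K3 K4 :: "real mat"
  assumes "0 < n" "0 < a" "0 < b" "0 < Z"
    and "max a b \<le> n" "n \<le> a + b"
    and "psd_mat n Psi"
    and "K3 \<in> carrier_mat m3 n" "K4 \<in> carrier_mat m4 n"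
  shows "\<exists>n' a' b' Psi' K3' K4'.
     max a' b' \<le> n' \<and> n' \<le> a' + b' \<and>
     psd_mat n' Psi' \<and> vec_space.rank n' Psi' = n' \<and>
     K3' \<in> carrier_mat m3 n' \<and> K4' \<in> carrier_mat m4 n' \<and>
     opt_loss n Psi a b Z K3 K4 = opt_loss n' Psi' a' b' Z K3' K4' \<and>
     (\<exists>P13 P15 P24 P25 P56 Q3 Q4. \<forall>s.
        optimal_scheme n Psi a b Z K3 K4 s \<longrightarrow>
        optimal_scheme n' Psi' a' b' Z K3' K4' (lin_transform P13 P15 P24 P25 P56 Q3 Q4 s)) \<and>
     (\<exists>P13 P15 P24 P25 P56 Q3 Q4. \<forall>s.
        optimal_scheme n' Psi' a' b' Z K3' K4' s \<longrightarrow>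
        optimal_scheme n Psi a b Z K3 K4 (lin_transform P13 P15 P24 P25 P56 Q3 Q4 s))"
proof -
  obtain n' a' b' Psi' K3' K4' where
    props: "max a' b' \<le> n'" "n' \<le> a' + b'" "psd_mat n' Psi'" "vec_space.rank n' Psi' = n'"
      "K3' \<in> carrier_mat m3 n'" "K4' \<in> carrier_mat m4 n'"
    and equiv: "equiv_problem Z n Psi a b K3 K4 n' Psi' a' b' K3' K4'"
    using reduce_to_full_rank[OF assms(5-9)] by blast
  note transfers = equiv[unfolded equiv_problem_def optimal_transfer_def]
  have forward: "\<exists>P13 P15 P24 P25 P56 Q3 Q4. \<forall>s. optimal_scheme n Psi a b Z K3 K4 s \<longrightarrow>
      optimal_scheme n' Psi' a' b' Z K3' K4' (lin_transform P13 P15 P24 P25 P56 Q3 Q4 s)"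
    using transfers by blast
  have backward:
    "\<exists>P13 P15 P24 P25 P56 Q3 Q4. \<forall>s. optimal_scheme n' Psi' a' b' Z K3' K4' s \<longrightarrow>
      optimal_scheme n Psi a b Z K3 K4 (lin_transform P13 P15 P24 P25 P56 Q3 Q4 s)"
    using transfers by blast
  show ?thesis
    by (rule exI[of _ n'], rule exI[of _ a'], rule exI[of _ b'], rule exI[of _ Psi'],
        rule exI[of _ K3'], rule exI[of _ K4']) (use props transfers forward backward in simp)
qed

end
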